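(* Let $G$ be an inner semi-Eulerian plane graph whose outer subgraph is a simple cycle, and let $G'$ be the inner subgraph of $G$ (with the coloring inherited from $G$). Then \[|\mathcal{B}(G)|=2\,|\mathcal{C}_B(G')|.\]
   Context: A plane graph is a finite planar graph with a fixed embedding in the plane. The external face is the unbounded face; all other faces are internal. A vertex is external if it lies on the boundary of the external face, and internal otherwise. A bipartite plane graph (vertices colored black and white) is inner semi-Eulerian if every internal black vertex has even degree. Let $F$ be the set of internal faces. A subset $B\subseteq F$ is a billiard nest if: (1) for each internal black vertex $b$, listing the faces in the angular sectors around $b$ in cyclic order as $f_1,\dots,f_{2k}$, either all of them are in $B$, none are in $B$, or exactly every second one is in $B$ (i.e. exactly $f_1,f_3,\dots$ or exactly $f_2,f_4,\dots$); (2) for each external black vertex $b$, either all internal faces incident to $b$ are in $B$ or none are. $\mathcal{B}(G)$ denotes the set of billiard nests. The inner subgraph $G'$ is the subgraph induced on the internal vertices of $G$; the outer subgraph is the subgraph induced on the external vertices. A channel of a graph $H$ is a vertex set $C$ such that every vertex of $H$ is adjacent to an even number of vertices of $C$ (the empty set included); $\mathcal{C}_B(H)$ is the set of channels of the bipartite graph $H$ consisting only of black vertices. *)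

theory Defs
  imports "HOL-Combinatorics.Permutations"
begin

text \<open>
  A plane graph is encoded as a combinatorial map (rotation system):
  a finite set D of darts (half-edges), a fixed-point-free involution
  alpha (the two darts of an edge), a permutation sigma (rotation of the
  darts around their common vertex, in the cyclic order of the embedding),
  and vert d the vertex at which dart d starts.  The corner (angular sector) of the
  embedding between dart d and sigma d belongs to the face of sigma d.
  Planarity = genus 0, i.e. Euler's formula V - E + F = 2 for the connected map.
\<close>

definition orb :: "('a \<Rightarrow> 'a) \<Rightarrow> 'a \<Rightarrow> 'a set" where
  "orb f x = {(f ^^ n) x | n. True}"

definition face_of :: "('d \<Rightarrow> 'd) \<Rightarrow> ('d \<Rightarrow> 'd) \<Rightarrow> 'd \<Rightarrow> 'd set" where
  "face_of \<alpha> \<sigma> d = orb (\<sigma> \<circ> \<alpha>) d"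

definition faces :: "'d set \<Rightarrow> ('d \<Rightarrow> 'd) \<Rightarrow> ('d \<Rightarrow> 'd) \<Rightarrow> 'd set set" where
  "faces D \<alpha> \<sigma> = face_of \<alpha> \<sigma> ` D"

definition adj :: "'d set \<Rightarrow> ('d \<Rightarrow> 'd) \<Rightarrow> ('d \<Rightarrow> 'v) \<Rightarrow> 'v \<Rightarrow> 'v \<Rightarrow> bool" where
  "adj D \<alpha> vert u v \<longleftrightarrow> (\<exists>d\<in>D. vert d = u \<and> vert (\<alpha> d) = v)"

definition deg :: "'d set \<Rightarrow> ('d \<Rightarrow> 'v) \<Rightarrow> 'v \<Rightarrow> nat" where
  "deg D vert v = card {d \<in> D. vert d = v}"

definition plane_graph ::
  "'d set \<Rightarrow> ('d \<Rightarrow> 'd) \<Rightarrow> ('d \<Rightarrow> 'd) \<Rightarrow> ('d \<Rightarrow> 'v) \<Rightarrow> 'd set \<Rightarrow> bool" where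
  "plane_graph D \<alpha> \<sigma> vert out \<longleftrightarrow>
     finite D \<and> \<alpha> permutes D \<and> (\<forall>d\<in>D. \<alpha> d \<noteq> d \<and> \<alpha> (\<alpha> d) = d) \<and>
     \<sigma> permutes D \<and> (\<forall>d\<in>D. vert (\<sigma> d) = vert d) \<and>
     (\<forall>d\<in>D. \<forall>e\<in>D. vert d = vert e \<longrightarrow> (\<exists>n. (\<sigma> ^^ n) d = e)) \<and>
     \<comment> \<open>no loops, no parallel edges\<close>
     (\<forall>d\<in>D. vert (\<alpha> d) \<noteq> vert d) \<and>
     (\<forall>d\<in>D. \<forall>e\<in>D. vert d = vert e \<and> vert (\<alpha> d) = vert (\<alpha> e) \<longrightarrow> d = e) \<and>
     \<comment> \<open>connected\<close>
     (\<forall>u\<in>vert ` D. \<forall>v\<in>vert ` D. (u, v) \<in> {(x, y). adj D \<alpha> vert x y}\<^sup>*) \<and>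
     \<comment> \<open>genus 0: Euler's formula\<close>
     int (card (vert ` D)) - int (card D div 2) + int (card (faces D \<alpha> \<sigma>)) = 2 \<and>
     out \<in> faces D \<alpha> \<sigma>"

definition proper_coloring :: "'d set \<Rightarrow> ('d \<Rightarrow> 'd) \<Rightarrow> ('d \<Rightarrow> 'v) \<Rightarrow> ('v \<Rightarrow> bool) \<Rightarrow> bool" where
  "proper_coloring D \<alpha> vert black \<longleftrightarrow> (\<forall>d\<in>D. black (vert d) \<noteq> black (vert (\<alpha> d)))"

definition external :: "'d set \<Rightarrow> ('d \<Rightarrow> 'd) \<Rightarrow> ('d \<Rightarrow> 'd) \<Rightarrow> ('d \<Rightarrow> 'v) \<Rightarrow> 'd set \<Rightarrow> 'v set" where
  "external D \<alpha> \<sigma> vert out = {v. \<exists>d\<in>D. vert d = v \<and> face_of \<alpha> \<sigma> d = out}"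

definition internal :: "'d set \<Rightarrow> ('d \<Rightarrow> 'd) \<Rightarrow> ('d \<Rightarrow> 'd) \<Rightarrow> ('d \<Rightarrow> 'v) \<Rightarrow> 'd set \<Rightarrow> 'v set" where
  "internal D \<alpha> \<sigma> vert out = vert ` D - external D \<alpha> \<sigma> vert out"

definition inner_semi_eulerian ::
  "'d set \<Rightarrow> ('d \<Rightarrow> 'd) \<Rightarrow> ('d \<Rightarrow> 'd) \<Rightarrow> ('d \<Rightarrow> 'v) \<Rightarrow> ('v \<Rightarrow> bool) \<Rightarrow> 'd set \<Rightarrow> bool" where
  "inner_semi_eulerian D \<alpha> \<sigma> vert black out \<longleftrightarrow>
     (\<forall>v\<in>internal D \<alpha> \<sigma> vert out. black v \<longrightarrow> even (deg D vert v))"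

definition outer_is_cycle ::
  "'d set \<Rightarrow> ('d \<Rightarrow> 'd) \<Rightarrow> ('d \<Rightarrow> 'd) \<Rightarrow> ('d \<Rightarrow> 'v) \<Rightarrow> 'd set \<Rightarrow> bool" where
  "outer_is_cycle D \<alpha> \<sigma> vert out \<longleftrightarrow>
     (\<exists>n c. 3 \<le> n \<and> bij_betw c {..<n} (external D \<alpha> \<sigma> vert out) \<and>
        (\<forall>u\<in>external D \<alpha> \<sigma> vert out. \<forall>v\<in>external D \<alpha> \<sigma> vert out.
           adj D \<alpha> vert u v \<longleftrightarrow>
           (\<exists>i<n. (u = c i \<and> v = c (Suc i mod n)) \<or> (v = c i \<and> u = c (Suc i mod n)))))"

text \<open>Billiard nests.  Around a vertex b, starting from a dart d at b, the faces
  in the angular sectors in cyclic order are face_of ((sigma^^i) d), i < deg b.\<close>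
definition billiard_nests ::
  "'d set \<Rightarrow> ('d \<Rightarrow> 'd) \<Rightarrow> ('d \<Rightarrow> 'd) \<Rightarrow> ('d \<Rightarrow> 'v) \<Rightarrow> ('v \<Rightarrow> bool) \<Rightarrow> 'd set \<Rightarrow> 'd set set set" where
  "billiard_nests D \<alpha> \<sigma> vert black out =
     {B. B \<subseteq> faces D \<alpha> \<sigma> - {out} \<and>
        (\<forall>b\<in>internal D \<alpha> \<sigma> vert out. black b \<longrightarrow>
           (\<forall>d\<in>D. vert d = b \<longrightarrow>
              (\<forall>i<deg D vert b. face_of \<alpha> \<sigma> ((\<sigma> ^^ i) d) \<in> B) \<or>
              (\<forall>i<deg D vert b. face_of \<alpha> \<sigma> ((\<sigma> ^^ i) d) \<notin> B) \<or>
              (\<forall>i<deg D vert b. face_of \<alpha> \<sigma> ((\<sigma> ^^ i) d) \<in> B \<longleftrightarrow> even i) \<or>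
              (\<forall>i<deg D vert b. face_of \<alpha> \<sigma> ((\<sigma> ^^ i) d) \<in> B \<longleftrightarrow> odd i))) \<and>
        (\<forall>b\<in>external D \<alpha> \<sigma> vert out. black b \<longrightarrow>
           (let I = {face_of \<alpha> \<sigma> d | d. d \<in> D \<and> vert d = b} - {out}
            in I \<subseteq> B \<or> I \<inter> B = {}))}"

definition inner_black_channels ::
  "'d set \<Rightarrow> ('d \<Rightarrow> 'd) \<Rightarrow> ('d \<Rightarrow> 'd) \<Rightarrow> ('d \<Rightarrow> 'v) \<Rightarrow> ('v \<Rightarrow> bool) \<Rightarrow> 'd set \<Rightarrow> 'v set set" where
  "inner_black_channels D \<alpha> \<sigma> vert black out =
     {C. C \<subseteq> {v \<in> internal D \<alpha> \<sigma> vert out. black v} \<and>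
        (\<forall>v\<in>internal D \<alpha> \<sigma> vert out. even (card {u \<in> C. adj D \<alpha> vert v u}))}"

end

(* For a set B of inner faces, a dart separates B when the two angular sectors beside it lie on
   different sides of B; the separating edges form the coboundary of B, an even edge set.
   Condition (1) for a nest says that at an internal black vertex either all or none of the
   edges separate B, and condition (2) that no edge at an external black vertex does, except
   the two on the outer cycle.  So every nest B has a channel: the internal black vertices whose
   edges separate B, and off the outer cycle the coboundary of B is the star of that channel.

   Each channel comes from exactly two nests, B and its complement in the inner faces.  Two nests
   with the same channel differ by a set of inner faces whose coboundary lies on the outer
   cycle; being even, it is empty or the whole cycle, so the difference is empty or everything.
   Conversely the star of a channel has odd vertices only on the outer cycle (an internal vertex
   of the channel has even degree, and a white internal vertex sees the channel an even number
   of times); correcting it along the outer cycle gives an even edge set, and in a plane graph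
   every even edge set is a coboundary: Euler's formula makes the cycle space and the cut space
   of the dual equally large over GF(2). *)

theory Submission
  imports Defs "HOL-Combinatorics.Orbits"
begin

section \<open>Counting over GF(2)\<close>

lemma odd_card_Collect_neq_iff:
  assumes "finite S"
  shows "odd (card {x\<in>S. P x \<noteq> Q x}) \<longleftrightarrow> odd (card {x\<in>S. P x}) \<noteq> odd (card {x\<in>S. Q x})"
proof -
  have split: "card {x\<in>S. A x} = card {x\<in>S. A x \<and> B x} + card {x\<in>S. A x \<and> \<not> B x}" for A B
  proof -
    have "{x\<in>S. A x} = {x\<in>S. A x \<and> B x} \<union> {x\<in>S. A x \<and> \<not> B x}" by blast
    then show ?thesis using assms by (simp add: card_Un_disjoint[symmetric] disjoint_iff)
  qed
  have "{x\<in>S. P x \<noteq> Q x \<and> P x} = {x\<in>S. P x \<and> \<not> Q x}"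
    "{x\<in>S. P x \<noteq> Q x \<and> \<not> P x} = {x\<in>S. Q x \<and> \<not> P x}"
    "{x\<in>S. Q x \<and> P x} = {x\<in>S. P x \<and> Q x}" by blast+
  then show ?thesis
    using split[of P Q] split[of Q P] split[of "\<lambda>x. P x \<noteq> Q x" P] by simp presburger
qed

lemma even_card_sym_diff_iff:
  assumes "finite A" "finite B"
  shows "even (card (sym_diff A B)) \<longleftrightarrow> (even (card A) \<longleftrightarrow> even (card B))"
proof -
  have "sym_diff A B = {x\<in>A \<union> B. (x \<in> A) \<noteq> (x \<in> B)}"
    and "A = {x\<in>A \<union> B. x \<in> A}" and "B = {x\<in>A \<union> B. x \<in> B}" by blast+
  moreover have "odd (card {x\<in>A \<union> B. (x \<in> A) \<noteq> (x \<in> B)})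
      \<longleftrightarrow> odd (card {x\<in>A \<union> B. x \<in> A}) \<noteq> odd (card {x\<in>A \<union> B. x \<in> B})"
    using assms by (intro odd_card_Collect_neq_iff) simp
  ultimately show ?thesis by (metis (no_types))
qed

lemma even_card_changes_bij:
  fixes P :: "'a \<Rightarrow> bool"
  assumes "finite S" and "bij_betw f S S"
  shows "even (card {x\<in>S. P x \<noteq> P (f x)})"
proof -
  have "bij_betw f {x\<in>S. P (f x)} {x\<in>S. P x}"
    using assms(2) unfolding bij_betw_def inj_on_def by (auto simp: image_iff)
  then have "card {x\<in>S. P (f x)} = card {x\<in>S. P x}" by (rule bij_betw_same_card)
  then show ?thesis using odd_card_Collect_neq_iff[OF assms(1), of P "\<lambda>x. P (f x)"] by simp
qed

text \<open>Rank-nullity for a map that is linear with respect to symmetric difference: its fibres are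
  translates of its kernel.\<close>

lemma card_image_mult_card_kernel:
  assumes "finite A"
    and linear: "\<And>X Y. X \<subseteq> A \<Longrightarrow> Y \<subseteq> A \<Longrightarrow> f (sym_diff X Y) = sym_diff (f X) (f Y)"
  shows "card (f ` Pow A) * card {X\<in>Pow A. f X = {}} = 2 ^ card A"
proof -
  let ?K = "{X\<in>Pow A. f X = {}}"
  have fibre: "{X\<in>Pow A. f X = f X0} = sym_diff X0 ` ?K" if X0: "X0 \<subseteq> A" for X0
  proof (intro set_eqI iffI)
    fix X assume X: "X \<in> {X\<in>Pow A. f X = f X0}"
    then have "sym_diff X0 X \<in> ?K" using linear[OF X0] X0 by auto
    moreover have "X = sym_diff X0 (sym_diff X0 X)" by blast
    ultimately show "X \<in> sym_diff X0 ` ?K" by (rule rev_image_eqI)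
  next
    fix X assume "X \<in> sym_diff X0 ` ?K"
    then obtain K where "K \<subseteq> A" "f K = {}" "X = sym_diff X0 K" by auto
    then show "X \<in> {X\<in>Pow A. f X = f X0}" using linear[OF X0] X0 by auto
  qed
  have card_fibre: "card {X\<in>Pow A. f X = f X0} = card ?K" if "X0 \<subseteq> A" for X0
  proof -
    have "inj_on (sym_diff X0) ?K" by (rule inj_onI) blast
    then show ?thesis unfolding fibre[OF that] by (rule card_image)
  qed
  have partition: "Pow A = (\<Union>y\<in>f ` Pow A. {X\<in>Pow A. f X = y})" by blast
  have "card (Pow A) = (\<Sum>y\<in>f ` Pow A. card {X\<in>Pow A. f X = y})"
    by (subst partition, rule card_UN_disjoint) (use assms(1) in auto)
  also have "\<dots> = (\<Sum>y\<in>f ` Pow A. card ?K)"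
    using card_fibre by (intro sum.cong) auto
  finally show ?thesis using assms(1) by (simp add: card_Pow)
qed

lemma card_even_subsets:
  assumes "finite V" "v \<in> V"
  shows "card {S. S \<subseteq> V \<and> even (card S)} = 2 ^ (card V - 1)"
proof -
  let ?add_parity = "\<lambda>T. if even (card T) then T else insert v T"
  have "bij_betw (\<lambda>S. S - {v}) {S. S \<subseteq> V \<and> even (card S)} (Pow (V - {v}))"
  proof (rule bij_betw_byWitness[where f' = ?add_parity])
    show "\<forall>S\<in>{S. S \<subseteq> V \<and> even (card S)}. ?add_parity (S - {v}) = S"
    proof
      fix S assume S: "S \<in> {S. S \<subseteq> V \<and> even (card S)}"
      then have "finite S" using assms(1) finite_subset by auto
      then show "?add_parity (S - {v}) = S"
        using S by (cases "v \<in> S") (auto simp: insert_absorb card_gt_0_iff)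
    qed
    show "?add_parity ` Pow (V - {v}) \<subseteq> {S. S \<subseteq> V \<and> even (card S)}"
    proof
      fix S assume "S \<in> ?add_parity ` Pow (V - {v})"
      then obtain T where T: "T \<subseteq> V - {v}" "S = ?add_parity T" by auto
      moreover have "finite T" "v \<notin> T" using T(1) assms(1) finite_subset by auto
      ultimately show "S \<in> {S. S \<subseteq> V \<and> even (card S)}" using assms(2) by auto
    qed
  qed auto
  then have "card {S. S \<subseteq> V \<and> even (card S)} = card (Pow (V - {v}))" by (rule bij_betw_same_card)
  also have "\<dots> = 2 ^ (card V - 1)" using assms by (simp add: card_Pow)
  finally show ?thesis .
qed

lemma odd_card_filter_doubleton:
  assumes "a \<noteq> b"
  shows "odd (card {x \<in> {a, b}. P x}) \<longleftrightarrow> P a \<noteq> P b"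
proof -
  have "{x \<in> {a, b}. P x} = (if P a then {a} else {}) \<union> (if P b then {b} else {})" by auto
  then show ?thesis using assms by simp
qed

definition all_none_or_alternate :: "nat \<Rightarrow> (nat \<Rightarrow> bool) \<Rightarrow> bool" where
  "all_none_or_alternate k g \<longleftrightarrow>
     (\<forall>i<k. g i) \<or> (\<forall>i<k. \<not> g i) \<or> (\<forall>i<k. g i \<longleftrightarrow> even i) \<or> (\<forall>i<k. g i \<longleftrightarrow> odd i)"

lemma all_none_or_alternate_iff:
  "all_none_or_alternate k g \<longleftrightarrow> (\<exists>a t. \<forall>i<k. g i \<longleftrightarrow> a \<noteq> (t \<and> odd i))"
proof
  assume "all_none_or_alternate k g"
  then show "\<exists>a t. \<forall>i<k. g i \<longleftrightarrow> a \<noteq> (t \<and> odd i)"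
    unfolding all_none_or_alternate_def
  proof (elim disjE)
    show ?thesis if "\<forall>i<k. g i" using that by (intro exI[of _ True] exI[of _ False]) simp
    show ?thesis if "\<forall>i<k. \<not> g i" using that by (intro exI[of _ False] exI[of _ False]) simp
    show ?thesis if "\<forall>i<k. g i \<longleftrightarrow> even i" using that by (intro exI[of _ True] exI[of _ True]) simp
    show ?thesis if "\<forall>i<k. g i \<longleftrightarrow> odd i" using that by (intro exI[of _ False] exI[of _ True]) simp
  qed
next
  assume "\<exists>a t. \<forall>i<k. g i \<longleftrightarrow> a \<noteq> (t \<and> odd i)"
  then obtain a t where "\<forall>i<k. g i \<longleftrightarrow> a \<noteq> (t \<and> odd i)" by blast
  then show "all_none_or_alternate k g"
    unfolding all_none_or_alternate_def by (cases a; cases t) simp_all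
qed

lemma all_none_or_alternate_flips_const:
  assumes "all_none_or_alternate k g" and "even k" and "g k = g 0"
  shows "\<exists>t. \<forall>i<k. (g i \<noteq> g (Suc i)) = t"
proof -
  obtain a t where g: "\<forall>i<k. g i \<longleftrightarrow> a \<noteq> (t \<and> odd i)"
    using assms(1) unfolding all_none_or_alternate_iff by blast
  have "(g i \<noteq> g (Suc i)) = t" if "i < k" for i
  proof (cases "Suc i < k")
    case True then show ?thesis using g that by (cases t) auto
  next
    case False
    then have k: "k = Suc i" using that by simp
    then have "odd i" using assms(2) by simp
    have "g (Suc i) = a" using g assms(3) unfolding k by simp
    moreover have "g i \<longleftrightarrow> a \<noteq> t" using g \<open>odd i\<close> unfolding k by simp
    ultimately show ?thesis by blast
  qed
  then show ?thesis by blast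
qed

lemma const_flips_all_none_or_alternate:
  assumes "\<And>i. (g i \<noteq> g (Suc i)) = t"
  shows "all_none_or_alternate k g"
proof -
  have "g i \<longleftrightarrow> g 0 \<noteq> (t \<and> odd i)" for i
  proof (induction i)
    case (Suc i)
    show ?case using assms[of i] Suc.IH by (cases t) auto
  qed simp
  then show ?thesis unfolding all_none_or_alternate_iff by blast
qed

section \<open>Plane maps: even edge sets are coboundaries\<close>

locale plane_map =
  fixes D :: "'d set" and \<alpha> \<sigma> :: "'d \<Rightarrow> 'd" and vert :: "'d \<Rightarrow> 'v" and out :: "'d set"
  assumes plane: "plane_graph D \<alpha> \<sigma> vert out"
begin

abbreviation face :: "'d \<Rightarrow> 'd set" where "face \<equiv> face_of \<alpha> \<sigma>"
abbreviation Faces :: "'d set set" where "Faces \<equiv> faces D \<alpha> \<sigma>"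
abbreviation Ext :: "'v set" where "Ext \<equiv> external D \<alpha> \<sigma> vert out"
abbreviation Inn :: "'v set" where "Inn \<equiv> internal D \<alpha> \<sigma> vert out"

lemma Inn_iff: "v \<in> Inn \<longleftrightarrow> v \<in> vert ` D \<and> v \<notin> Ext"
  unfolding internal_def by blast

lemma finite_darts: "finite D"
  and alpha_permutes: "\<alpha> permutes D"
  and sigma_permutes: "\<sigma> permutes D"
  and alpha_neq: "d \<in> D \<Longrightarrow> \<alpha> d \<noteq> d"
  and vert_sigma: "d \<in> D \<Longrightarrow> vert (\<sigma> d) = vert d"
  and sigma_transitive: "d \<in> D \<Longrightarrow> e \<in> D \<Longrightarrow> vert d = vert e \<Longrightarrow> \<exists>n. (\<sigma> ^^ n) d = e"
  and vert_alpha_neq: "d \<in> D \<Longrightarrow> vert (\<alpha> d) \<noteq> vert d"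
  and no_parallel_edges:
    "d \<in> D \<Longrightarrow> e \<in> D \<Longrightarrow> vert d = vert e \<Longrightarrow> vert (\<alpha> d) = vert (\<alpha> e) \<Longrightarrow> d = e"
  and connected:
    "u \<in> vert ` D \<Longrightarrow> v \<in> vert ` D \<Longrightarrow> (u, v) \<in> {(x, y). adj D \<alpha> vert x y}\<^sup>*"
  and euler_formula: "int (card (vert ` D)) - int (card D div 2) + int (card Faces) = 2"
  and out_in_Faces: "out \<in> Faces"
  using plane unfolding plane_graph_def by blast+

lemma alpha_alpha [simp]: "\<alpha> (\<alpha> d) = d"
  using plane permutes_not_in[OF alpha_permutes] unfolding plane_graph_def by (cases "d \<in> D") auto

lemma alpha_in_D: "d \<in> D \<Longrightarrow> \<alpha> d \<in> D"
  and sigma_in_D: "d \<in> D \<Longrightarrow> \<sigma> d \<in> D"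
  by (simp_all add: permutes_in_image alpha_permutes sigma_permutes)

lemma sigma_funpow_in_D: "d \<in> D \<Longrightarrow> (\<sigma> ^^ n) d \<in> D"
  by (induction n) (auto simp: sigma_in_D)

lemma vert_sigma_funpow: "d \<in> D \<Longrightarrow> vert ((\<sigma> ^^ n) d) = vert d"
  by (induction n) (auto simp: vert_sigma sigma_funpow_in_D)

lemma permutation_sigma: "permutation \<sigma>"
  using finite_darts sigma_permutes by (rule permutes_imp_permutation)

lemma permutation_face_perm: "permutation (\<sigma> \<circ> \<alpha>)"
  using finite_darts permutes_compose[OF alpha_permutes sigma_permutes]
  by (rule permutes_imp_permutation)

lemma face_eq_orbit: "face d = orbit (\<sigma> \<circ> \<alpha>) d"
  unfolding face_of_def orb_def orbit_altdef_permutation[OF permutation_face_perm] by simp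

lemma in_face: "d \<in> face d"
  unfolding face_eq_orbit by (rule permutation_self_in_orbit[OF permutation_face_perm])

lemma face_sigma_alpha: "face (\<sigma> (\<alpha> d)) = face d"
  using permutation_orbit_step[OF permutation_face_perm, of d] by (simp add: face_eq_orbit)

lemma face_sigma: "face (\<sigma> d) = face (\<alpha> d)"
  using face_sigma_alpha[of "\<alpha> d"] by simp

lemma face_in_Faces: "d \<in> D \<Longrightarrow> face d \<in> Faces"
  unfolding faces_def by simp

lemma finite_Faces: "finite Faces"
  unfolding faces_def using finite_darts by simp

lemma darts_at_vertex_eq_orbit:
  assumes "d \<in> D"
  shows "{e \<in> D. vert e = vert d} = orbit \<sigma> d"
proof
  show "{e \<in> D. vert e = vert d} \<subseteq> orbit \<sigma> d"
    unfolding orbit_altdef_permutation[OF permutation_sigma] using assms sigma_transitive by fastforce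
  show "orbit \<sigma> d \<subseteq> {e \<in> D. vert e = vert d}"
    unfolding orbit_altdef_permutation[OF permutation_sigma]
    using assms sigma_funpow_in_D vert_sigma_funpow by auto
qed

lemma
  assumes d: "d \<in> D"
  shows sigma_funpow_deg: "(\<sigma> ^^ deg D vert (vert d)) d = d"
    and deg_pos: "0 < deg D vert (vert d)"
    and dart_at_vertex_eq_sigma_funpow:
      "\<And>e. e \<in> D \<Longrightarrow> vert e = vert d \<Longrightarrow> \<exists>i<deg D vert (vert d). e = (\<sigma> ^^ i) d"
    and inj_on_sigma_funpow: "inj_on (\<lambda>i. (\<sigma> ^^ i) d) {..<deg D vert (vert d)}"
proof -
  have self: "d \<in> orbit \<sigma> d" by (rule permutation_self_in_orbit[OF permutation_sigma])
  let ?m = "funpow_dist1 \<sigma> d d"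
  have orbit: "orbit \<sigma> d = (\<lambda>n. (\<sigma> ^^ n) d) ` {..<?m}"
    using orbit_conv_funpow_dist1[OF self] by (simp add: atLeast0LessThan)
  have inj: "inj_on (\<lambda>n. (\<sigma> ^^ n) d) {..<?m}"
    using inj_on_funpow_dist1[OF self] by (simp add: atLeast0LessThan)
  have deg: "deg D vert (vert d) = ?m"
    unfolding deg_def darts_at_vertex_eq_orbit[OF d] orbit using inj by (simp add: card_image)
  show "(\<sigma> ^^ deg D vert (vert d)) d = d" unfolding deg by (rule funpow_dist1_prop[OF self])
  show "0 < deg D vert (vert d)" unfolding deg by simp
  show "\<exists>i<deg D vert (vert d). e = (\<sigma> ^^ i) d" if "e \<in> D" "vert e = vert d" for e
    using that darts_at_vertex_eq_orbit[OF d] unfolding deg orbit by auto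
  show "inj_on (\<lambda>i. (\<sigma> ^^ i) d) {..<deg D vert (vert d)}" unfolding deg by (rule inj)
qed

definition edges :: "'d set set" where
  "edges = {{d, \<alpha> d} | d. d \<in> D}"

definition coboundary :: "'d set set \<Rightarrow> 'd set set" where
  "coboundary Z = {e \<in> edges. odd (card {x \<in> e. face x \<in> Z})}"

definition odd_vertices :: "'d set set \<Rightarrow> 'v set" where
  "odd_vertices Y = {v. odd (card {d \<in> D. vert d = v \<and> {d, \<alpha> d} \<in> Y})}"

lemma finite_edges: "finite edges"
  unfolding edges_def using finite_darts by simp

lemma edge_eq_iff: "{x, \<alpha> x} = {d, \<alpha> d} \<longleftrightarrow> x = d \<or> x = \<alpha> d"
  by (auto simp: doubleton_eq_iff)

lemma edge_alpha: "{\<alpha> d, d} = {d, \<alpha> d}"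
  by (rule insert_commute)

lemma edge_in_edges: "d \<in> D \<Longrightarrow> {d, \<alpha> d} \<in> edges"
  unfolding edges_def by blast

lemma edgesE:
  assumes "e \<in> edges"
  obtains d where "d \<in> D" "e = {d, \<alpha> d}"
  using assms unfolding edges_def by blast

lemma edge_eq_of_mem: "x \<in> {d, \<alpha> d} \<Longrightarrow> {x, \<alpha> x} = {d, \<alpha> d}"
  by auto

lemma card_edges: "2 * card edges = card D"
proof -
  have "2 * card edges = card (\<Union>edges)"
  proof (rule card_partition)
    show "card e = 2" if "e \<in> edges" for e
      using that by (elim edgesE) (simp add: alpha_neq[symmetric])
    show "e1 \<inter> e2 = {}" if "e1 \<in> edges" "e2 \<in> edges" "e1 \<noteq> e2" for e1 e2
      using that by (elim edgesE) (metis disjoint_iff edge_eq_of_mem)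
  qed (use finite_edges finite_darts in \<open>auto simp: edges_def\<close>)
  moreover have "\<Union>edges = D" unfolding edges_def using alpha_in_D by blast
  ultimately show ?thesis by simp
qed

lemma coboundary_edge:
  "d \<in> D \<Longrightarrow> {d, \<alpha> d} \<in> coboundary Z \<longleftrightarrow> (face d \<in> Z) \<noteq> (face (\<alpha> d) \<in> Z)"
  unfolding coboundary_def
  using edge_in_edges odd_card_filter_doubleton[OF alpha_neq[symmetric], of d "\<lambda>x. face x \<in> Z"]
  by (simp add: alpha_neq eq_commute)

lemma coboundary_subset: "coboundary Z \<subseteq> edges"
  unfolding coboundary_def by blast

lemma coboundary_sym_diff: "coboundary (sym_diff Z1 Z2) = sym_diff (coboundary Z1) (coboundary Z2)"
proof -
  have "e \<in> coboundary (sym_diff Z1 Z2) \<longleftrightarrow> e \<in> sym_diff (coboundary Z1) (coboundary Z2)"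
    if "e \<in> edges" for e
  proof -
    have "finite e" using that by (auto elim: edgesE)
    moreover have "{x \<in> e. face x \<in> sym_diff Z1 Z2} = {x \<in> e. (face x \<in> Z1) \<noteq> (face x \<in> Z2)}"
      by blast
    ultimately have "odd (card {x \<in> e. face x \<in> sym_diff Z1 Z2})
        \<longleftrightarrow> odd (card {x \<in> e. face x \<in> Z1}) \<noteq> odd (card {x \<in> e. face x \<in> Z2})"
      using odd_card_Collect_neq_iff by simp
    then show ?thesis using that unfolding coboundary_def by blast
  qed
  then show ?thesis using coboundary_subset by blast
qed

lemma odd_vertices_sym_diff:
  "odd_vertices (sym_diff Y1 Y2) = sym_diff (odd_vertices Y1) (odd_vertices Y2)"
proof -
  have "odd (card {d \<in> D. vert d = v \<and> {d, \<alpha> d} \<in> sym_diff Y1 Y2}) \<longleftrightarrow>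
        odd (card {d \<in> D. vert d = v \<and> {d, \<alpha> d} \<in> Y1})
          \<noteq> odd (card {d \<in> D. vert d = v \<and> {d, \<alpha> d} \<in> Y2})" for v
  proof -
    let ?S = "{d \<in> D. vert d = v}"
    have "{d \<in> D. vert d = v \<and> {d, \<alpha> d} \<in> sym_diff Y1 Y2}
        = {d \<in> ?S. ({d, \<alpha> d} \<in> Y1) \<noteq> ({d, \<alpha> d} \<in> Y2)}"
      and "{d \<in> D. vert d = v \<and> {d, \<alpha> d} \<in> Y1} = {d \<in> ?S. {d, \<alpha> d} \<in> Y1}"
      and "{d \<in> D. vert d = v \<and> {d, \<alpha> d} \<in> Y2} = {d \<in> ?S. {d, \<alpha> d} \<in> Y2}"
      by blast+
    then show ?thesis using odd_card_Collect_neq_iff[of ?S] finite_darts by simp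
  qed
  then show ?thesis unfolding odd_vertices_def by blast
qed

lemma odd_vertices_subset: "odd_vertices Y \<subseteq> vert ` D"
proof (rule subsetI, rule ccontr)
  fix v assume "v \<in> odd_vertices Y" "v \<notin> vert ` D"
  then have "odd (card {d \<in> D. vert d = v \<and> {d, \<alpha> d} \<in> Y})"
    and "{d \<in> D. vert d = v \<and> {d, \<alpha> d} \<in> Y} = {}"
    unfolding odd_vertices_def by auto
  then show False by simp
qed

lemma finite_odd_vertices: "finite (odd_vertices Y)"
  using odd_vertices_subset finite_darts finite_subset by blast

lemma odd_vertices_empty [simp]: "odd_vertices {} = {}"
  unfolding odd_vertices_def by simp

lemma odd_vertices_edge:
  assumes "d \<in> D"
  shows "odd_vertices {{d, \<alpha> d}} = {vert d, vert (\<alpha> d)}"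
proof -
  have "{x \<in> D. vert x = v \<and> {x, \<alpha> x} \<in> {{d, \<alpha> d}}} = {x \<in> {d, \<alpha> d}. vert x = v}" for v
    using assms alpha_in_D edge_eq_iff by auto
  moreover have "odd (card {x \<in> {d, \<alpha> d}. vert x = v}) \<longleftrightarrow> v \<in> {vert d, vert (\<alpha> d)}" for v
    using odd_card_filter_doubleton[OF alpha_neq[OF assms, symmetric], of "\<lambda>x. vert x = v"]
      vert_alpha_neq[OF assms] by auto
  ultimately show ?thesis unfolding odd_vertices_def by auto
qed

lemma even_card_odd_vertices: "Y \<subseteq> edges \<Longrightarrow> even (card (odd_vertices Y))"
proof (induction Y rule: infinite_finite_induct)
  case (infinite Y)
  then show ?case using finite_edges finite_subset by blast
next
  case (insert e Y)
  obtain d where d: "d \<in> D" "e = {d, \<alpha> d}" using insert.prems by (auto elim: edgesE)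
  have "insert e Y = sym_diff Y {e}" using insert.hyps(2) by blast
  then have "odd_vertices (insert e Y) = sym_diff (odd_vertices Y) {vert d, vert (\<alpha> d)}"
    using odd_vertices_sym_diff odd_vertices_edge[OF d(1)] d(2) by simp
  moreover have "card {vert d, vert (\<alpha> d)} = 2" using vert_alpha_neq[OF d(1)] by auto
  ultimately show ?case
    using insert even_card_sym_diff_iff[OF finite_odd_vertices, of "{vert d, vert (\<alpha> d)}"] by simp
qed simp

lemma bij_betw_sigma_darts_at: "bij_betw \<sigma> {d \<in> D. vert d = v} {d \<in> D. vert d = v}"
proof -
  have "\<sigma> ` {d \<in> D. vert d = v} = {d \<in> D. vert d = v}"
  proof
    show "{d \<in> D. vert d = v} \<subseteq> \<sigma> ` {d \<in> D. vert d = v}"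
    proof
      fix e assume e: "e \<in> {d \<in> D. vert d = v}"
      have "inv \<sigma> e \<in> D" using e permutes_in_image[OF permutes_inv[OF sigma_permutes]] by simp
      moreover have "\<sigma> (inv \<sigma> e) = e" using permutes_inverses(1)[OF sigma_permutes] by simp
      moreover have "vert (inv \<sigma> e) = v" using e vert_sigma[OF \<open>inv \<sigma> e \<in> D\<close>] \<open>\<sigma> (inv \<sigma> e) = e\<close> by simp
      ultimately show "e \<in> \<sigma> ` {d \<in> D. vert d = v}" by force
    qed
  qed (use sigma_in_D vert_sigma in auto)
  moreover have "inj_on \<sigma> {d \<in> D. vert d = v}"
    using permutes_inj[OF sigma_permutes] by (rule inj_on_subset) simp
  ultimately show ?thesis unfolding bij_betw_def by simp
qed

text \<open>Around each vertex the sides of the incident edges alternate an even number of times.\<close>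

lemma odd_vertices_coboundary [simp]: "odd_vertices (coboundary Z) = {}"
proof -
  have "even (card {d \<in> D. vert d = v \<and> {d, \<alpha> d} \<in> coboundary Z})" for v
  proof -
    have "{d \<in> D. vert d = v \<and> {d, \<alpha> d} \<in> coboundary Z}
        = {d \<in> {d \<in> D. vert d = v}. (face d \<in> Z) \<noteq> (face (\<sigma> d) \<in> Z)}"
      using coboundary_edge face_sigma by auto
    then show ?thesis
      using even_card_changes_bij[OF _ bij_betw_sigma_darts_at, of v "\<lambda>d. face d \<in> Z"]
        finite_darts by simp
  qed
  then show ?thesis unfolding odd_vertices_def by simp
qed

lemma alpha_sigma_invariant_const:
  assumes alpha: "\<And>d. d \<in> D \<Longrightarrow> P (\<alpha> d) = P d"
    and sigma: "\<And>d. d \<in> D \<Longrightarrow> P (\<sigma> d) = P d"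
    and "d \<in> D" "e \<in> D"
  shows "P e = P d"
proof -
  have at_vertex: "P e = P d" if "d \<in> D" "e \<in> D" "vert d = vert e" for d e
  proof -
    have "P ((\<sigma> ^^ n) d) = P d" for n
      by (induction n) (use sigma sigma_funpow_in_D \<open>d \<in> D\<close> in auto)
    then show ?thesis using sigma_transitive[OF that] by blast
  qed
  have "\<forall>e\<in>D. vert e = u \<longrightarrow> P e = P d" if "(vert d, u) \<in> {(x, y). adj D \<alpha> vert x y}\<^sup>*" for u
    using that
  proof (induction rule: rtrancl_induct)
    case base
    then show ?case using at_vertex \<open>d \<in> D\<close> by metis
  next
    case (step u w)
    then obtain x where "x \<in> D" "vert x = u" "vert (\<alpha> x) = w" unfolding adj_def by auto
    then show ?case using step.IH alpha at_vertex alpha_in_D by metis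
  qed
  then show ?thesis using connected assms(3,4) by blast
qed

lemma coboundary_eq_empty_iff:
  assumes "Z \<subseteq> Faces"
  shows "coboundary Z = {} \<longleftrightarrow> Z = {} \<or> Z = Faces"
proof
  assume empty: "coboundary Z = {}"
  have alpha: "(face (\<alpha> d) \<in> Z) = (face d \<in> Z)" if "d \<in> D" for d
    using coboundary_edge[OF that, of Z] empty by blast
  have sigma: "(face (\<sigma> d) \<in> Z) = (face d \<in> Z)" if "d \<in> D" for d
    using alpha[OF that] face_sigma by simp
  show "Z = {} \<or> Z = Faces"
  proof (cases "\<exists>d\<in>D. face d \<in> Z")
    case True
    then have "\<forall>e\<in>D. face e \<in> Z"
      using alpha_sigma_invariant_const[of "\<lambda>d. face d \<in> Z", OF alpha sigma] by blast
    then show ?thesis using assms unfolding faces_def by blast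
  next
    case False
    then show ?thesis using assms unfolding faces_def by blast
  qed
next
  assume "Z = {} \<or> Z = Faces"
  then have sides: "(face d \<in> Z) = (face (\<alpha> d) \<in> Z)" if "d \<in> D" for d
    using face_in_Faces alpha_in_D that by blast
  show "coboundary Z = {}"
  proof (rule equals0I)
    fix e assume e: "e \<in> coboundary Z"
    then obtain d where "d \<in> D" "e = {d, \<alpha> d}" using coboundary_subset by (blast elim: edgesE)
    then show False using e coboundary_edge sides by blast
  qed
qed

definition edge_rel :: "'d set set \<Rightarrow> ('v \<times> 'v) set" where
  "edge_rel Y = {(vert d, vert (\<alpha> d)) | d. d \<in> D \<and> {d, \<alpha> d} \<in> Y}"

lemma odd_vertices_path:
  assumes "(u, v) \<in> (edge_rel Y)\<^sup>*"
  shows "\<exists>P\<subseteq>Y. odd_vertices P = sym_diff {u} {v}"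
  using assms
proof (induction rule: rtrancl_induct)
  case base
  show ?case by (intro exI[of _ "{}"]) simp
next
  case (step v w)
  then obtain P where P: "P \<subseteq> Y" "odd_vertices P = sym_diff {u} {v}" by blast
  from step.hyps(2) obtain d where d: "d \<in> D" "{d, \<alpha> d} \<in> Y" "v = vert d" "w = vert (\<alpha> d)"
    unfolding edge_rel_def by blast
  have "odd_vertices (sym_diff P {{d, \<alpha> d}}) = sym_diff (sym_diff {u} {v}) {v, w}"
    using odd_vertices_sym_diff P(2) odd_vertices_edge[OF d(1)] d by simp
  also have "\<dots> = sym_diff {u} {w}" using vert_alpha_neq[OF d(1)] d(3,4) by auto
  finally show ?case using P(1) d(2) by (intro exI[of _ "sym_diff P {{d, \<alpha> d}}"]) auto
qed

lemma even_set_eq_odd_vertices: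
  assumes connected: "\<And>u v. u \<in> V \<Longrightarrow> v \<in> V \<Longrightarrow> (u, v) \<in> (edge_rel Y)\<^sup>*"
    and "finite S" "S \<subseteq> V" "even (card S)"
  shows "\<exists>P\<subseteq>Y. odd_vertices P = S"
  using assms(2-)
proof (induction "card S" arbitrary: S rule: less_induct)
  case less
  show ?case
  proof (cases "S = {}")
    case True
    then show ?thesis by (intro exI[of _ "{}"]) simp
  next
    case False
    then obtain u where u: "u \<in> S" by blast
    have "S \<noteq> {u}" using less.prems(3) by auto
    then obtain v where v: "v \<in> S" "v \<noteq> u" using u by blast
    let ?S' = "S - {u, v}"
    have "card ?S' = card S - 2" using u v less.prems(1) by (simp add: card_Diff_subset)
    moreover have "card S \<noteq> 0" using u less.prems(1) by auto
    ultimately have "card ?S' < card S" "even (card ?S')" using less.prems(3) by auto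
    then obtain P where P: "P \<subseteq> Y" "odd_vertices P = ?S'"
      using less.hyps[of ?S'] less.prems(1,2) by auto
    have "u \<in> V" "v \<in> V" using u v less.prems(2) by auto
    from odd_vertices_path[OF connected[OF this]]
    obtain Q where Q: "Q \<subseteq> Y" "odd_vertices Q = sym_diff {u} {v}"
      by (elim exE conjE)
    have "odd_vertices (sym_diff P Q) = S"
      using P(2) Q(2) u v odd_vertices_sym_diff by auto
    then show ?thesis using P(1) Q(1) by (intro exI[of _ "sym_diff P Q"]) auto
  qed
qed

lemma connected_edge_rel: "u \<in> vert ` D \<Longrightarrow> v \<in> vert ` D \<Longrightarrow> (u, v) \<in> (edge_rel edges)\<^sup>*"
proof -
  have "{(x, y). adj D \<alpha> vert x y} \<subseteq> edge_rel edges"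
    unfolding edge_rel_def adj_def using edge_in_edges by blast
  then show "u \<in> vert ` D \<Longrightarrow> v \<in> vert ` D \<Longrightarrow> (u, v) \<in> (edge_rel edges)\<^sup>*"
    using connected rtrancl_mono by blast
qed

definition cycle_space :: "'d set set set" where
  "cycle_space = {Y \<in> Pow edges. odd_vertices Y = {}}"

lemma card_Faces_add_card_vertices: "card Faces + card (vert ` D) = card edges + 2"
  using euler_formula card_edges by linarith

lemma card_coboundary_image: "card (coboundary ` Pow Faces) * 2 = 2 ^ card Faces"
proof -
  have "{Z \<in> Pow Faces. coboundary Z = {}} = {{}, Faces}"
    using coboundary_eq_empty_iff by auto
  moreover have "Faces \<noteq> {}" using out_in_Faces by blast
  ultimately show ?thesis
    using card_image_mult_card_kernel[OF finite_Faces coboundary_sym_diff] by simp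
qed

lemma card_cycle_space_le: "card cycle_space * 2 ^ (card (vert ` D) - 1) \<le> 2 ^ card edges"
proof -
  obtain v where v: "v \<in> vert ` D" using out_in_Faces unfolding faces_def by blast
  have "{S. S \<subseteq> vert ` D \<and> even (card S)} \<subseteq> odd_vertices ` Pow edges"
  proof
    fix S assume "S \<in> {S. S \<subseteq> vert ` D \<and> even (card S)}"
    moreover have "finite S" if "S \<subseteq> vert ` D" using that finite_darts finite_subset by blast
    ultimately obtain P where "P \<subseteq> edges" "odd_vertices P = S"
      using even_set_eq_odd_vertices[OF connected_edge_rel] by blast
    then show "S \<in> odd_vertices ` Pow edges" by blast
  qed
  then have "card {S. S \<subseteq> vert ` D \<and> even (card S)} \<le> card (odd_vertices ` Pow edges)"
    by (rule card_mono[rotated]) (simp add: finite_edges)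
  then have "2 ^ (card (vert ` D) - 1) \<le> card (odd_vertices ` Pow edges)"
    using card_even_subsets[OF _ v] finite_darts by simp
  then have "card cycle_space * 2 ^ (card (vert ` D) - 1)
      \<le> card (odd_vertices ` Pow edges) * card cycle_space" by simp
  also have "\<dots> = 2 ^ card edges"
    using card_image_mult_card_kernel[OF finite_edges odd_vertices_sym_diff] by (simp add: cycle_space_def)
  finally show ?thesis .
qed

text \<open>The cycle space of a plane graph is the cut space of its dual: the inclusion is clear,
  and Euler's formula makes the dimensions agree.\<close>

lemma cycle_space_eq_coboundaries: "cycle_space = coboundary ` Pow Faces"
proof -
  have sub: "coboundary ` Pow Faces \<subseteq> cycle_space"
    using coboundary_subset unfolding cycle_space_def by auto
  define m where "m = card edges + 1 - card (vert ` D)"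
  have "card (vert ` D) \<ge> 1" "card Faces \<ge> 1"
    using out_in_Faces finite_darts finite_Faces unfolding faces_def
    by (auto simp: Suc_le_eq card_gt_0_iff)
  then have "card Faces = Suc m" and edges: "card edges = m + (card (vert ` D) - 1)"
    using card_Faces_add_card_vertices unfolding m_def by linarith+
  then have "card (coboundary ` Pow Faces) = 2 ^ m"
    using card_coboundary_image by simp
  moreover have "card cycle_space \<le> 2 ^ m"
    using card_cycle_space_le unfolding edges power_add by simp
  moreover have "finite cycle_space" unfolding cycle_space_def using finite_edges by simp
  ultimately show ?thesis using card_seteq[OF _ sub] by simp
qed

lemma card_adjacent_in:
  "card {u \<in> C. adj D \<alpha> vert v u} = card {d \<in> D. vert d = v \<and> vert (\<alpha> d) \<in> C}"
proof -
  have "bij_betw (\<lambda>d. vert (\<alpha> d)) {d \<in> D. vert d = v \<and> vert (\<alpha> d) \<in> C} {u \<in> C. adj D \<alpha> vert v u}"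
    unfolding bij_betw_def
  proof
    show "inj_on (\<lambda>d. vert (\<alpha> d)) {d \<in> D. vert d = v \<and> vert (\<alpha> d) \<in> C}"
      by (rule inj_onI) (use no_parallel_edges in auto)
  qed (auto simp: adj_def)
  then show ?thesis by (simp add: bij_betw_same_card)
qed

end

section \<open>The outer cycle\<close>

lemma mod_succ_pred_facts:
  fixes i n :: nat
  assumes "i < n" "3 \<le> n"
  shows "Suc i mod n < n" "(i + n - 1) mod n < n"
    "Suc ((i + n - 1) mod n) mod n = i" "(Suc i mod n + n - 1) mod n = i"
    "Suc i mod n \<noteq> (i + n - 1) mod n"
proof -
  have succ: "Suc i mod n = (if Suc i = n then 0 else Suc i)" using assms by auto
  have pred: "(i + n - 1) mod n = (if i = 0 then n - 1 else i - 1)"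
  proof (cases "i = 0")
    case False
    then have "i + n - 1 = (i - 1) + n" by simp
    then have "(i + n - 1) mod n = (i - 1) mod n" by simp
    then show ?thesis using False assms by simp
  qed (use assms in simp)
  show "Suc i mod n < n" "(i + n - 1) mod n < n" using assms by simp_all
  show "Suc ((i + n - 1) mod n) mod n = i" unfolding pred using assms by (cases "i = 0") auto
  show "(Suc i mod n + n - 1) mod n = i"
    unfolding succ using assms by (cases "Suc i = n") simp_all
  show "Suc i mod n \<noteq> (i + n - 1) mod n" unfolding succ pred using assms by auto
qed

locale outer_cycle_map = plane_map D \<alpha> \<sigma> vert out
  for D :: "'d set" and \<alpha> \<sigma> :: "'d \<Rightarrow> 'd" and vert :: "'d \<Rightarrow> 'v" and out :: "'d set" +
  fixes n :: nat and c :: "nat \<Rightarrow> 'v"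
  assumes three_le_n: "3 \<le> n"
    and bij_cycle: "bij_betw c {..<n} Ext"
    and adj_Ext_iff: "\<forall>u\<in>Ext. \<forall>v\<in>Ext. adj D \<alpha> vert u v \<longleftrightarrow>
           (\<exists>i<n. (u = c i \<and> v = c (Suc i mod n)) \<or> (v = c i \<and> u = c (Suc i mod n)))"
begin

definition cycle_index :: "'v \<Rightarrow> nat" where
  "cycle_index v = inv_into {..<n} c v"

definition cycle_next :: "'v \<Rightarrow> 'v" where
  "cycle_next v = c (Suc (cycle_index v) mod n)"

definition cycle_prev :: "'v \<Rightarrow> 'v" where
  "cycle_prev v = c ((cycle_index v + n - 1) mod n)"

lemma cycle_in_Ext: "i < n \<Longrightarrow> c i \<in> Ext"
  using bij_cycle unfolding bij_betw_def by auto

lemma cycle_index: "v \<in> Ext \<Longrightarrow> cycle_index v < n \<and> c (cycle_index v) = v"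
  using bij_betw_imp_surj_on[OF bij_cycle] inv_into_into[of v c "{..<n}"] f_inv_into_f[of v c "{..<n}"]
  unfolding cycle_index_def by simp

lemma cycle_index_cycle: "i < n \<Longrightarrow> cycle_index (c i) = i"
  unfolding cycle_index_def using inv_into_f_f[OF bij_betw_imp_inj_on[OF bij_cycle]] by simp

lemma cycle_next_in_Ext: "v \<in> Ext \<Longrightarrow> cycle_next v \<in> Ext"
  and cycle_prev_in_Ext: "v \<in> Ext \<Longrightarrow> cycle_prev v \<in> Ext"
  unfolding cycle_next_def cycle_prev_def using cycle_in_Ext three_le_n by simp_all

lemma cycle_next_prev: "v \<in> Ext \<Longrightarrow> cycle_next (cycle_prev v) = v"
  and cycle_prev_next: "v \<in> Ext \<Longrightarrow> cycle_prev (cycle_next v) = v"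
  and cycle_next_neq_prev: "v \<in> Ext \<Longrightarrow> cycle_next v \<noteq> cycle_prev v"
proof -
  assume v: "v \<in> Ext"
  then have i: "cycle_index v < n" and cv: "c (cycle_index v) = v" using cycle_index by auto
  note facts = mod_succ_pred_facts[OF i three_le_n]
  show "cycle_next (cycle_prev v) = v" "cycle_prev (cycle_next v) = v"
    unfolding cycle_next_def cycle_prev_def using facts cv cycle_index_cycle by simp_all
  show "cycle_next v \<noteq> cycle_prev v"
    unfolding cycle_next_def cycle_prev_def
    using facts(1,2,5) bij_betw_imp_inj_on[OF bij_cycle] by (simp add: inj_on_eq_iff)
qed

lemma adj_Ext_imp_next_or_prev:
  assumes "u \<in> Ext" "v \<in> Ext" "adj D \<alpha> vert u v"
  shows "v = cycle_next u \<or> v = cycle_prev u"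
proof -
  obtain i where i: "i < n" "(u = c i \<and> v = c (Suc i mod n)) \<or> (v = c i \<and> u = c (Suc i mod n))"
    using adj_Ext_iff assms by blast
  note facts = mod_succ_pred_facts[OF i(1) three_le_n]
  from i(2) show ?thesis
  proof
    assume "u = c i \<and> v = c (Suc i mod n)"
    then show ?thesis unfolding cycle_next_def using cycle_index_cycle i(1) by simp
  next
    assume "v = c i \<and> u = c (Suc i mod n)"
    then show ?thesis unfolding cycle_prev_def using cycle_index_cycle facts(1,4) by simp
  qed
qed

lemma adj_cycle_next: "v \<in> Ext \<Longrightarrow> adj D \<alpha> vert v (cycle_next v)"
  and adj_cycle_prev: "v \<in> Ext \<Longrightarrow> adj D \<alpha> vert v (cycle_prev v)"
proof -
  assume v: "v \<in> Ext"
  then have i: "cycle_index v < n" and cv: "c (cycle_index v) = v" using cycle_index by auto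
  note facts = mod_succ_pred_facts[OF i three_le_n]
  have "\<exists>i<n. v = c i \<and> cycle_next v = c (Suc i mod n)"
    unfolding cycle_next_def using i cv by auto
  then show "adj D \<alpha> vert v (cycle_next v)"
    using adj_Ext_iff v cycle_next_in_Ext[OF v] by blast
  have "\<exists>i<n. cycle_prev v = c i \<and> v = c (Suc i mod n)"
    unfolding cycle_prev_def using facts(2,3) cv by (intro exI[of _ "(cycle_index v + n - 1) mod n"]) simp
  then show "adj D \<alpha> vert v (cycle_prev v)"
    using adj_Ext_iff v cycle_prev_in_Ext[OF v] by blast
qed

definition outer_dart :: "'d \<Rightarrow> bool" where
  "outer_dart d \<longleftrightarrow> d \<in> D \<and> face d = out"

lemma Ext_iff_outer_dart: "v \<in> Ext \<longleftrightarrow> (\<exists>d. outer_dart d \<and> vert d = v)"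
  unfolding external_def outer_dart_def by blast

lemma outer_dart_face_step: "outer_dart d \<Longrightarrow> outer_dart (\<sigma> (\<alpha> d))"
  unfolding outer_dart_def using face_sigma_alpha sigma_in_D alpha_in_D by simp

lemma outer_dart_vert_Ext: "outer_dart d \<Longrightarrow> vert d \<in> Ext"
  and outer_dart_vert_alpha_Ext: "outer_dart d \<Longrightarrow> vert (\<alpha> d) \<in> Ext"
proof -
  assume d: "outer_dart d"
  then show "vert d \<in> Ext" using Ext_iff_outer_dart by blast
  have "vert (\<sigma> (\<alpha> d)) \<in> Ext" using d outer_dart_face_step Ext_iff_outer_dart by blast
  then show "vert (\<alpha> d) \<in> Ext" using d unfolding outer_dart_def by (simp add: vert_sigma alpha_in_D)
qed

lemma outer_dart_adj: "outer_dart d \<Longrightarrow> vert (\<alpha> d) = cycle_next (vert d) \<or> vert (\<alpha> d) = cycle_prev (vert d)"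
  using adj_Ext_imp_next_or_prev outer_dart_vert_Ext outer_dart_vert_alpha_Ext
  unfolding adj_def outer_dart_def by blast

text \<open>An external vertex has its two cycle neighbours, hence at least two darts.\<close>

lemma sigma_neq_at_Ext:
  assumes x: "x \<in> D" and "vert x \<in> Ext"
  shows "\<sigma> x \<noteq> x"
proof
  assume "\<sigma> x = x"
  then have "(\<sigma> ^^ m) x = x" for m by (induction m) simp_all
  then have single: "y = x" if "y \<in> D" "vert y = vert x" for y
    using sigma_transitive[OF x that(1) that(2)[symmetric]] by metis
  obtain y where y: "y \<in> D" "vert y = vert x" "vert (\<alpha> y) = cycle_next (vert x)"
    using adj_cycle_next[OF assms(2)] unfolding adj_def by blast
  obtain z where z: "z \<in> D" "vert z = vert x" "vert (\<alpha> z) = cycle_prev (vert x)"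
    using adj_cycle_prev[OF assms(2)] unfolding adj_def by blast
  show False using single[OF y(1,2)] single[OF z(1,2)] y(3) z(3) cycle_next_neq_prev[OF assms(2)] by simp
qed

definition first_outer_dart :: 'd where
  "first_outer_dart = (SOME d. outer_dart d)"

lemma outer_dart_first_outer_dart: "outer_dart first_outer_dart"
proof -
  have "\<exists>d. outer_dart d" using out_in_Faces unfolding faces_def outer_dart_def by auto
  then show ?thesis unfolding first_outer_dart_def by (rule someI_ex)
qed

text \<open>The boundary walk of the outer face runs around the outer cycle in one direction,
  the one taken by its first step.\<close>

definition walk_next :: "'v \<Rightarrow> 'v" where
  "walk_next = (if vert (\<alpha> first_outer_dart) = cycle_next (vert first_outer_dart) then cycle_next else cycle_prev)"

definition walk_prev :: "'v \<Rightarrow> 'v" where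
  "walk_prev = (if vert (\<alpha> first_outer_dart) = cycle_next (vert first_outer_dart) then cycle_prev else cycle_next)"

lemma walk_next_cases:
  "(walk_next = cycle_next \<and> walk_prev = cycle_prev) \<or> (walk_next = cycle_prev \<and> walk_prev = cycle_next)"
  unfolding walk_next_def walk_prev_def by simp

lemma walk_prev_next: "v \<in> Ext \<Longrightarrow> walk_prev (walk_next v) = v"
  and walk_next_neq_prev: "v \<in> Ext \<Longrightarrow> walk_next v \<noteq> walk_prev v"
  using walk_next_cases cycle_next_prev cycle_prev_next cycle_next_neq_prev by (metis (full_types))+

lemma walk_next_in_Ext: "v \<in> Ext \<Longrightarrow> walk_next v \<in> Ext"
  unfolding walk_next_def using cycle_next_in_Ext cycle_prev_in_Ext by simp

lemma inj_on_walk_next: "inj_on walk_next Ext"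
  by (rule inj_on_inverseI[where g = walk_prev]) (rule walk_prev_next)

lemma vert_alpha_outer_dart_step:
  assumes d: "outer_dart d" and walk: "vert (\<alpha> d) = walk_next (vert d)"
  shows "vert (\<alpha> (\<sigma> (\<alpha> d))) = walk_next (vert (\<sigma> (\<alpha> d)))"
proof (rule ccontr)
  let ?e = "\<sigma> (\<alpha> d)"
  have dD: "d \<in> D" using d unfolding outer_dart_def by simp
  have ve: "vert ?e = vert (\<alpha> d)" using dD by (simp add: vert_sigma alpha_in_D)
  have ad: "vert (\<alpha> d) \<in> Ext" using outer_dart_vert_alpha_Ext[OF d] .
  assume "vert (\<alpha> ?e) \<noteq> walk_next (vert ?e)"
  then have "vert (\<alpha> ?e) = walk_prev (vert (\<alpha> d))"
    using outer_dart_adj[OF outer_dart_face_step[OF d]] walk_next_cases ve by auto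
  also have "\<dots> = vert (\<alpha> (\<alpha> d))"
    using walk walk_prev_next[OF outer_dart_vert_Ext[OF d]] by simp
  finally have "?e = \<alpha> d"
    using no_parallel_edges[OF sigma_in_D[OF alpha_in_D[OF dD]] alpha_in_D[OF dD]] ve by simp
  then show False using sigma_neq_at_Ext[OF alpha_in_D[OF dD] ad] by simp
qed

lemma vert_alpha_outer_dart: "outer_dart d \<Longrightarrow> vert (\<alpha> d) = walk_next (vert d)"
proof -
  let ?d0 = first_outer_dart
  assume d: "outer_dart d"
  then have "d \<in> face ?d0"
    using outer_dart_first_outer_dart in_face[of d] unfolding outer_dart_def by simp
  then obtain k where k: "d = ((\<sigma> \<circ> \<alpha>) ^^ k) ?d0" unfolding face_of_def orb_def by blast
  have "outer_dart (((\<sigma> \<circ> \<alpha>) ^^ k) ?d0) \<and>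
      vert (\<alpha> (((\<sigma> \<circ> \<alpha>) ^^ k) ?d0)) = walk_next (vert (((\<sigma> \<circ> \<alpha>) ^^ k) ?d0))"
  proof (induction k)
    case 0
    show ?case
      using outer_dart_first_outer_dart outer_dart_adj[OF outer_dart_first_outer_dart]
      unfolding walk_next_def by auto
  next
    case (Suc k)
    then show ?case using outer_dart_face_step vert_alpha_outer_dart_step by simp
  qed
  then show ?thesis using k by simp
qed

lemma outer_dart_alpha: "outer_dart d \<Longrightarrow> \<not> outer_dart (\<alpha> d)"
proof
  assume d: "outer_dart d" and ad: "outer_dart (\<alpha> d)"
  have v: "vert d \<in> Ext" using outer_dart_vert_Ext[OF d] .
  have "vert d = walk_next (walk_next (vert d))"
    using vert_alpha_outer_dart[OF ad] vert_alpha_outer_dart[OF d] by simp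
  then have "walk_prev (vert d) = walk_next (vert d)"
    using walk_prev_next[OF walk_next_in_Ext[OF v]] by simp
  then show False using walk_next_neq_prev[OF v] by simp
qed

lemma outer_dart_unique: "outer_dart d \<Longrightarrow> outer_dart d' \<Longrightarrow> vert d = vert d' \<Longrightarrow> d = d'"
  using vert_alpha_outer_dart no_parallel_edges unfolding outer_dart_def by metis

abbreviation inner_faces :: "'d set set" where
  "inner_faces \<equiv> Faces - {out}"

definition outer_edges :: "'d set set" where
  "outer_edges = {{d, \<alpha> d} | d. outer_dart d}"

lemma outer_edges_subset: "outer_edges \<subseteq> edges"
  unfolding outer_edges_def edges_def outer_dart_def by blast

lemma edge_in_outer_edges_iff: "{d, \<alpha> d} \<in> outer_edges \<longleftrightarrow> outer_dart d \<or> outer_dart (\<alpha> d)"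
proof
  assume "{d, \<alpha> d} \<in> outer_edges"
  then obtain x where "outer_dart x" "{x, \<alpha> x} = {d, \<alpha> d}" unfolding outer_edges_def by blast
  then show "outer_dart d \<or> outer_dart (\<alpha> d)" unfolding edge_eq_iff by auto
next
  assume "outer_dart d \<or> outer_dart (\<alpha> d)"
  then show "{d, \<alpha> d} \<in> outer_edges"
    unfolding outer_edges_def by (metis (mono_tags, lifting) alpha_alpha edge_alpha mem_Collect_eq)
qed

lemma coboundary_out: "coboundary {out} = outer_edges"
proof (intro set_eqI iffI)
  fix e assume e: "e \<in> coboundary {out}"
  then obtain d where d: "d \<in> D" "e = {d, \<alpha> d}" using coboundary_subset by (blast elim: edgesE)
  then have "(face d = out) \<noteq> (face (\<alpha> d) = out)" using coboundary_edge e by simp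
  then show "e \<in> outer_edges"
    using d edge_in_outer_edges_iff alpha_in_D unfolding outer_dart_def by blast
next
  fix e assume "e \<in> outer_edges"
  then obtain d where d: "outer_dart d" "e = {d, \<alpha> d}" unfolding outer_edges_def by blast
  then have "face (\<alpha> d) \<noteq> out" using outer_dart_alpha[OF d(1)] alpha_in_D unfolding outer_dart_def by auto
  then show "e \<in> coboundary {out}" using coboundary_edge d unfolding outer_dart_def by simp
qed

lemma outer_edge_darts_at:
  assumes x: "outer_dart x"
  shows "{z \<in> D. vert z = vert (\<alpha> x) \<and> {z, \<alpha> z} \<in> outer_edges} \<subseteq> {\<alpha> x, \<sigma> (\<alpha> x)}"
proof
  fix z assume z: "z \<in> {z \<in> D. vert z = vert (\<alpha> x) \<and> {z, \<alpha> z} \<in> outer_edges}"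
  then obtain w where w: "outer_dart w" "z = w \<or> z = \<alpha> w"
    using edge_eq_iff unfolding outer_edges_def by blast
  have "x \<in> D" using x unfolding outer_dart_def by simp
  then have vy: "vert (\<sigma> (\<alpha> x)) = vert (\<alpha> x)" by (simp add: vert_sigma alpha_in_D)
  show "z \<in> {\<alpha> x, \<sigma> (\<alpha> x)}"
    using w(2)
  proof
    assume "z = w"
    then show ?thesis using outer_dart_unique[OF w(1) outer_dart_face_step[OF x]] z vy by simp
  next
    assume "z = \<alpha> w"
    then have "walk_next (vert w) = walk_next (vert x)"
      using z vert_alpha_outer_dart w(1) x by simp
    then have "vert w = vert x"
      using inj_on_walk_next outer_dart_vert_Ext w(1) x by (meson inj_on_eq_iff)
    then have "w = x" using outer_dart_unique w(1) x by blast
    then show ?thesis using \<open>z = \<alpha> w\<close> by simp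
  qed
qed

text \<open>Each vertex of the outer cycle has exactly two outer edges, so an even subset contains
  with each edge the next one along the boundary walk, hence all of them.\<close>

lemma even_subset_outer_edges:
  assumes W: "W \<subseteq> outer_edges" and even: "odd_vertices W = {}"
  shows "W = {} \<or> W = outer_edges"
proof (cases "W = {}")
  case False
  then obtain x0 where x0: "outer_dart x0" "{x0, \<alpha> x0} \<in> W" using W unfolding outer_edges_def by blast
  have step: "{\<sigma> (\<alpha> x), \<alpha> (\<sigma> (\<alpha> x))} \<in> W" if x: "outer_dart x" "{x, \<alpha> x} \<in> W" for x
  proof (rule ccontr)
    let ?S = "{z \<in> D. vert z = vert (\<alpha> x) \<and> {z, \<alpha> z} \<in> W}"
    assume "{\<sigma> (\<alpha> x), \<alpha> (\<sigma> (\<alpha> x))} \<notin> W"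
    then have "?S \<subseteq> {\<alpha> x}" using outer_edge_darts_at[OF x(1)] W by blast
    moreover have "\<alpha> x \<in> ?S" using x alpha_in_D unfolding outer_dart_def by (simp add: edge_alpha)
    ultimately have "?S = {\<alpha> x}" by blast
    moreover have "even (card ?S)" using even unfolding odd_vertices_def by blast
    ultimately show False by simp
  qed
  have walk: "{((\<sigma> \<circ> \<alpha>) ^^ k) x0, \<alpha> (((\<sigma> \<circ> \<alpha>) ^^ k) x0)} \<in> W \<and> outer_dart (((\<sigma> \<circ> \<alpha>) ^^ k) x0)" for k
    by (induction k) (use x0 step outer_dart_face_step in auto)
  have "outer_edges \<subseteq> W"
  proof
    fix e assume "e \<in> outer_edges"
    then obtain y where y: "outer_dart y" "e = {y, \<alpha> y}" unfolding outer_edges_def by blast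
    then have "y \<in> face x0" using in_face[of y] x0(1) unfolding outer_dart_def by simp
    then obtain k where "y = ((\<sigma> \<circ> \<alpha>) ^^ k) x0" unfolding face_of_def orb_def by blast
    then show "e \<in> W" using walk y(2) by simp
  qed
  then show ?thesis using W by blast
qed simp

lemma edge_rel_sym: "(u, v) \<in> edge_rel Y \<Longrightarrow> (v, u) \<in> edge_rel Y"
proof -
  assume "(u, v) \<in> edge_rel Y"
  then obtain d where d: "d \<in> D" "{d, \<alpha> d} \<in> Y" "u = vert d" "v = vert (\<alpha> d)"
    unfolding edge_rel_def by blast
  then have "\<alpha> d \<in> D" "{\<alpha> d, \<alpha> (\<alpha> d)} \<in> Y" "v = vert (\<alpha> d)" "u = vert (\<alpha> (\<alpha> d))"
    using alpha_in_D by (simp_all add: edge_alpha)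
  then show "(v, u) \<in> edge_rel Y" unfolding edge_rel_def by blast
qed

lemma outer_edges_connected: "u \<in> Ext \<Longrightarrow> v \<in> Ext \<Longrightarrow> (u, v) \<in> (edge_rel outer_edges)\<^sup>*"
proof -
  let ?R = "edge_rel outer_edges"
  have sym: "sym (?R\<^sup>*)" by (rule sym_rtrancl) (auto simp: sym_def intro: edge_rel_sym)
  have walk: "(v, walk_next v) \<in> ?R" if v: "v \<in> Ext" for v
  proof -
    obtain d where d: "outer_dart d" "vert d = v" using Ext_iff_outer_dart[THEN iffD1, OF v] by blast
    then have "{d, \<alpha> d} \<in> outer_edges" unfolding outer_edges_def by blast
    then have "(vert d, vert (\<alpha> d)) \<in> ?R" using d(1) unfolding edge_rel_def outer_dart_def by blast
    then show ?thesis using d vert_alpha_outer_dart[OF d(1)] by simp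
  qed
  have cycle_step: "(v, cycle_next v) \<in> ?R\<^sup>*" if v: "v \<in> Ext" for v
    using walk_next_cases
  proof
    assume "walk_next = cycle_next \<and> walk_prev = cycle_prev"
    then show ?thesis using walk[OF v] by simp
  next
    assume "walk_next = cycle_prev \<and> walk_prev = cycle_next"
    then have "(cycle_next v, v) \<in> ?R"
      using walk[OF cycle_next_in_Ext[OF v]] cycle_prev_next[OF v] by simp
    then show ?thesis using sym unfolding sym_def by blast
  qed
  have from_c0: "(c 0, c i) \<in> ?R\<^sup>*" if "i < n" for i
    using that
  proof (induction i)
    case (Suc i)
    then have i: "i < n" by simp
    have "cycle_next (c i) = c (Suc i)"
      unfolding cycle_next_def using cycle_index_cycle[OF i] Suc.prems by simp
    then have "(c i, c (Suc i)) \<in> ?R\<^sup>*" using cycle_step[OF cycle_in_Ext[OF i]] by simp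
    with Suc.IH[OF i] show ?case by (rule rtrancl_trans)
  qed simp
  show "u \<in> Ext \<Longrightarrow> v \<in> Ext \<Longrightarrow> (u, v) \<in> ?R\<^sup>*"
    using from_c0 cycle_index sym unfolding sym_def by (metis rtrancl_trans)
qed

lemma coboundary_Faces [simp]: "coboundary Faces = {}"
  using coboundary_eq_empty_iff by blast

lemma coboundary_subset_outer_edges:
  assumes Z: "Z \<subseteq> inner_faces" and sub: "coboundary Z \<subseteq> outer_edges"
  shows "Z = {} \<or> Z = inner_faces"
  using even_subset_outer_edges[OF sub odd_vertices_coboundary]
proof
  assume "coboundary Z = {}"
  then show ?thesis using coboundary_eq_empty_iff Z out_in_Faces by blast
next
  assume cob: "coboundary Z = outer_edges"
  have "insert out Z = sym_diff Z {out}" using Z by blast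
  then have "coboundary (insert out Z) = {}"
    using coboundary_sym_diff[of Z "{out}"] cob coboundary_out by simp
  moreover have "insert out Z \<subseteq> Faces" using Z out_in_Faces by blast
  ultimately have "insert out Z = Faces" using coboundary_eq_empty_iff by blast
  then show ?thesis using Z by blast
qed

text \<open>An edge set whose odd vertices all lie on the outer cycle agrees, away from the outer
  face, with a coboundary of inner faces: correct it by a subset of the outer cycle to an even
  edge set, and that is a coboundary.\<close>

lemma inner_coboundary_exists:
  assumes X: "X \<subseteq> edges" and odd: "odd_vertices X \<subseteq> Ext"
  shows "\<exists>B \<subseteq> inner_faces. \<forall>d\<in>D. face d \<noteq> out \<longrightarrow> face (\<alpha> d) \<noteq> out \<longrightarrow>
           ({d, \<alpha> d} \<in> coboundary B \<longleftrightarrow> {d, \<alpha> d} \<in> X)"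
proof -
  have "\<exists>P\<subseteq>outer_edges. odd_vertices P = odd_vertices X"
    by (rule even_set_eq_odd_vertices[where V = Ext])
      (use outer_edges_connected finite_odd_vertices odd even_card_odd_vertices[OF X] in auto)
  then obtain P where P: "P \<subseteq> outer_edges" "odd_vertices P = odd_vertices X" by blast
  have "sym_diff X P \<in> cycle_space"
    using X P outer_edges_subset odd_vertices_sym_diff unfolding cycle_space_def by auto
  then obtain Z where Z: "Z \<subseteq> Faces" "coboundary Z = sym_diff X P"
    unfolding cycle_space_eq_coboundaries by blast
  define B where "B = (if out \<in> Z then Faces - Z else Z)"
  have "B \<subseteq> inner_faces" unfolding B_def using Z(1) by auto
  moreover have "coboundary B = sym_diff X P"
  proof (cases "out \<in> Z")
    case True
    have "Faces - Z = sym_diff Faces Z" using Z(1) by blast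
    then show ?thesis using True Z(2) coboundary_sym_diff[of Faces Z] unfolding B_def by simp
  qed (simp add: B_def Z(2))
  moreover have "{d, \<alpha> d} \<notin> P" if "d \<in> D" "face d \<noteq> out" "face (\<alpha> d) \<noteq> out" for d
    using that P(1) edge_in_outer_edges_iff alpha_in_D unfolding outer_dart_def by blast
  ultimately show ?thesis by blast
qed

lemma faces_at_Inn_ne_out:
  assumes "d \<in> D" "vert d \<in> Inn"
  shows "face d \<noteq> out" "face (\<alpha> d) \<noteq> out"
proof -
  have "vert d \<notin> Ext" "vert (\<sigma> d) \<notin> Ext" using assms Inn_iff vert_sigma by auto
  then show "face d \<noteq> out" "face (\<alpha> d) \<noteq> out"
    using assms(1) sigma_in_D face_sigma Ext_iff_outer_dart unfolding outer_dart_def by metis+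
qed

lemma face_sigma_funpow_ne_out:
  assumes d: "outer_dart d" and i: "0 < i" "i < deg D vert (vert d)"
  shows "face ((\<sigma> ^^ i) d) \<noteq> out"
proof
  have dD: "d \<in> D" using d unfolding outer_dart_def by simp
  assume "face ((\<sigma> ^^ i) d) = out"
  then have "outer_dart ((\<sigma> ^^ i) d)" unfolding outer_dart_def using sigma_funpow_in_D[OF dD] by simp
  then have "(\<sigma> ^^ i) d = (\<sigma> ^^ 0) d" using outer_dart_unique d vert_sigma_funpow[OF dD] by simp
  then show False using inj_onD[OF inj_on_sigma_funpow[OF dD], of i 0] deg_pos[OF dD] i by simp
qed

lemma inner_faces_at_outer_dart:
  assumes d: "outer_dart d"
  shows "{face e | e. e \<in> D \<and> vert e = vert d} - {out}
       = {face ((\<sigma> ^^ i) d) | i. 0 < i \<and> i < deg D vert (vert d)}"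
proof (intro set_eqI iffI)
  have dD: "d \<in> D" using d unfolding outer_dart_def by simp
  fix x
  assume "x \<in> {face e | e. e \<in> D \<and> vert e = vert d} - {out}"
  then obtain e where e: "e \<in> D" "vert e = vert d" "x = face e" "x \<noteq> out" by blast
  then obtain i where "i < deg D vert (vert d)" "e = (\<sigma> ^^ i) d"
    using dart_at_vertex_eq_sigma_funpow[OF dD] by metis
  moreover have "i \<noteq> 0" using calculation e d unfolding outer_dart_def by auto
  ultimately show "x \<in> {face ((\<sigma> ^^ i) d) | i. 0 < i \<and> i < deg D vert (vert d)}" using e by auto
next
  have dD: "d \<in> D" using d unfolding outer_dart_def by simp
  fix x
  assume "x \<in> {face ((\<sigma> ^^ i) d) | i. 0 < i \<and> i < deg D vert (vert d)}"
  then show "x \<in> {face e | e. e \<in> D \<and> vert e = vert d} - {out}"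
    using face_sigma_funpow_ne_out[OF d] sigma_funpow_in_D[OF dD] vert_sigma_funpow[OF dD] by blast
qed



end

section \<open>Billiard nests and channels\<close>

locale billiard_map = outer_cycle_map D \<alpha> \<sigma> vert out n c
  for D :: "'d set" and \<alpha> \<sigma> :: "'d \<Rightarrow> 'd" and vert :: "'d \<Rightarrow> 'v" and out :: "'d set"
    and n :: nat and c :: "nat \<Rightarrow> 'v" +
  fixes black :: "'v \<Rightarrow> bool"
  assumes proper: "proper_coloring D \<alpha> vert black"
    and semi_eulerian: "inner_semi_eulerian D \<alpha> \<sigma> vert black out"
begin

text \<open>The sectors beside dart \<open>d\<close> belong to \<open>face d\<close> and \<open>face (\<sigma> d) = face (\<alpha> d)\<close>, the two
  faces along the edge of \<open>d\<close>.\<close>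

definition separates :: "'d set set \<Rightarrow> 'd \<Rightarrow> bool" where
  "separates B d \<longleftrightarrow> (face d \<in> B) \<noteq> (face (\<sigma> d) \<in> B)"

definition inner_nest_cond :: "'d set set \<Rightarrow> bool" where
  "inner_nest_cond B \<longleftrightarrow> (\<forall>b\<in>Inn. black b \<longrightarrow>
     (\<forall>d\<in>D. \<forall>e\<in>D. vert d = b \<and> vert e = b \<longrightarrow> separates B d = separates B e))"

definition outer_nest_cond :: "'d set set \<Rightarrow> bool" where
  "outer_nest_cond B \<longleftrightarrow> (\<forall>b\<in>Ext. black b \<longrightarrow>
     (\<forall>d\<in>D. vert d = b \<and> face d \<noteq> out \<and> face (\<sigma> d) \<noteq> out \<longrightarrow> \<not> separates B d))"

definition channel_of :: "'d set set \<Rightarrow> 'v set" where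
  "channel_of B = {b \<in> Inn. black b \<and> (\<exists>d\<in>D. vert d = b \<and> separates B d)}"

lemma black_alpha: "d \<in> D \<Longrightarrow> black (vert (\<alpha> d)) \<longleftrightarrow> \<not> black (vert d)"
  using proper unfolding proper_coloring_def by blast

lemma even_deg_Inn: "b \<in> Inn \<Longrightarrow> black b \<Longrightarrow> even (deg D vert b)"
  using semi_eulerian unfolding inner_semi_eulerian_def by blast

lemma separates_sigma_funpow:
  "separates B ((\<sigma> ^^ i) d) \<longleftrightarrow> (face ((\<sigma> ^^ i) d) \<in> B) \<noteq> (face ((\<sigma> ^^ Suc i) d) \<in> B)"
  unfolding separates_def by simp

lemma separates_iff_coboundary: "d \<in> D \<Longrightarrow> separates B d \<longleftrightarrow> {d, \<alpha> d} \<in> coboundary B"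
  unfolding separates_def using coboundary_edge face_sigma by simp

lemma separates_alpha: "separates B (\<alpha> d) \<longleftrightarrow> separates B d"
  unfolding separates_def using face_sigma[of d] face_sigma[of "\<alpha> d"] by auto

lemma inner_vertex_sectors_iff:
  assumes b: "b \<in> Inn" "black b"
  shows "(\<forall>d\<in>D. vert d = b \<longrightarrow> all_none_or_alternate (deg D vert b) (\<lambda>i. face ((\<sigma> ^^ i) d) \<in> B))
     \<longleftrightarrow> (\<forall>d\<in>D. \<forall>e\<in>D. vert d = b \<and> vert e = b \<longrightarrow> separates B d = separates B e)"
proof (rule iffI; intro ballI impI)
  fix d e
  assume sectors: "\<forall>d\<in>D. vert d = b \<longrightarrow> all_none_or_alternate (deg D vert b) (\<lambda>i. face ((\<sigma> ^^ i) d) \<in> B)"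
    and d: "d \<in> D" and e: "e \<in> D" and at_b: "vert d = b \<and> vert e = b"
  let ?k = "deg D vert (vert d)"
  have "\<exists>t. \<forall>i<?k. ((face ((\<sigma> ^^ i) d) \<in> B) \<noteq> (face ((\<sigma> ^^ Suc i) d) \<in> B)) = t"
    by (rule all_none_or_alternate_flips_const)
      (use sectors d at_b even_deg_Inn[OF b] sigma_funpow_deg[OF d] in auto)
  then obtain t where "\<forall>i<?k. separates B ((\<sigma> ^^ i) d) = t"
    unfolding separates_sigma_funpow by blast
  moreover obtain i j where "i < ?k" "d = (\<sigma> ^^ i) d" "j < ?k" "e = (\<sigma> ^^ j) d"
    using dart_at_vertex_eq_sigma_funpow[OF d] d e at_b by metis
  ultimately show "separates B d = separates B e" by metis
next
  fix d
  assume same: "\<forall>d\<in>D. \<forall>e\<in>D. vert d = b \<and> vert e = b \<longrightarrow> separates B d = separates B e"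
    and d: "d \<in> D" and "vert d = b"
  then have "((face ((\<sigma> ^^ i) d) \<in> B) \<noteq> (face ((\<sigma> ^^ Suc i) d) \<in> B)) = separates B d" for i
    using sigma_funpow_in_D[OF d] vert_sigma_funpow[OF d] unfolding separates_sigma_funpow[symmetric] by blast
  then show "all_none_or_alternate (deg D vert b) (\<lambda>i. face ((\<sigma> ^^ i) d) \<in> B)"
    by (rule const_flips_all_none_or_alternate)
qed

lemma sectors_const_at_outer_dart:
  assumes d: "outer_dart d" "vert d = b"
    and flat: "\<forall>e\<in>D. vert e = b \<and> face e \<noteq> out \<and> face (\<sigma> e) \<noteq> out \<longrightarrow> \<not> separates B e"
    and i: "0 < i" "i < deg D vert (vert d)"
  shows "face ((\<sigma> ^^ i) d) \<in> B \<longleftrightarrow> face (\<sigma> d) \<in> B"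
  using i
proof (induction i)
  case (Suc i)
  have dD: "d \<in> D" using d(1) unfolding outer_dart_def by simp
  show ?case
  proof (cases "i = 0")
    case False
    then have "0 < i" "i < deg D vert (vert d)" using Suc.prems by auto
    moreover have "face ((\<sigma> ^^ i) d) \<noteq> out" "face (\<sigma> ((\<sigma> ^^ i) d)) \<noteq> out"
      using face_sigma_funpow_ne_out[OF d(1), of i] face_sigma_funpow_ne_out[OF d(1), of "Suc i"]
        calculation Suc.prems by simp_all
    then have "\<not> separates B ((\<sigma> ^^ i) d)"
      using flat sigma_funpow_in_D[OF dD] vert_sigma_funpow[OF dD] d(2) by blast
    ultimately show ?thesis using Suc.IH unfolding separates_sigma_funpow by simp
  qed simp
qed simp

lemma outer_vertex_sectors_iff:
  assumes b: "b \<in> Ext"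
  shows "(let I = {face d | d. d \<in> D \<and> vert d = b} - {out} in I \<subseteq> B \<or> I \<inter> B = {})
     \<longleftrightarrow> (\<forall>d\<in>D. vert d = b \<and> face d \<noteq> out \<and> face (\<sigma> d) \<noteq> out \<longrightarrow> \<not> separates B d)"
    (is "(let I = ?I in _) \<longleftrightarrow> ?flat")
proof -
  have "?I \<subseteq> B \<or> ?I \<inter> B = {} \<longleftrightarrow> ?flat"
  proof
    assume I: "?I \<subseteq> B \<or> ?I \<inter> B = {}"
    show ?flat
    proof (intro ballI impI)
      fix d assume "d \<in> D" "vert d = b \<and> face d \<noteq> out \<and> face (\<sigma> d) \<noteq> out"
      then have "face d \<in> ?I" "face (\<sigma> d) \<in> ?I" using sigma_in_D vert_sigma by blast+
      then show "\<not> separates B d" using I unfolding separates_def by blast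
    qed
  next
    assume ?flat
    obtain d where d: "outer_dart d" "vert d = b" using Ext_iff_outer_dart[THEN iffD1, OF b] by blast
    have "x \<in> B \<longleftrightarrow> face (\<sigma> d) \<in> B" if "x \<in> ?I" for x
    proof -
      from that[unfolded inner_faces_at_outer_dart[OF d(1), unfolded d(2)]]
      obtain i where "0 < i" "i < deg D vert b" "x = face ((\<sigma> ^^ i) d)" by blast
      then show ?thesis using sectors_const_at_outer_dart[OF d \<open>?flat\<close>] d(2) by simp
    qed
    then show "?I \<subseteq> B \<or> ?I \<inter> B = {}" by blast
  qed
  then show ?thesis by (simp add: Let_def)
qed

abbreviation nests :: "'d set set set" where
  "nests \<equiv> billiard_nests D \<alpha> \<sigma> vert black out"

abbreviation channels :: "'v set set" where
  "channels \<equiv> inner_black_channels D \<alpha> \<sigma> vert black out"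

lemma nests_iff: "B \<in> nests \<longleftrightarrow> B \<subseteq> inner_faces \<and> inner_nest_cond B \<and> outer_nest_cond B"
proof -
  have "(\<forall>b\<in>Inn. black b \<longrightarrow> (\<forall>d\<in>D. vert d = b \<longrightarrow>
           all_none_or_alternate (deg D vert b) (\<lambda>i. face ((\<sigma> ^^ i) d) \<in> B))) \<longleftrightarrow> inner_nest_cond B"
    unfolding inner_nest_cond_def using inner_vertex_sectors_iff by blast
  moreover have "(\<forall>b\<in>Ext. black b \<longrightarrow> (let I = {face d | d. d \<in> D \<and> vert d = b} - {out}
           in I \<subseteq> B \<or> I \<inter> B = {})) \<longleftrightarrow> outer_nest_cond B"
    unfolding outer_nest_cond_def using outer_vertex_sectors_iff by blast
  ultimately show ?thesis
    unfolding billiard_nests_def mem_Collect_eq all_none_or_alternate_def by blast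
qed

lemma channel_of_iff:
  assumes "inner_nest_cond B" "b \<in> Inn" "black b" "d \<in> D" "vert d = b"
  shows "b \<in> channel_of B \<longleftrightarrow> separates B d"
  using assms unfolding inner_nest_cond_def channel_of_def by blast

lemma channel_of_nest:
  assumes B: "B \<in> nests"
  shows "channel_of B \<in> channels"
proof -
  have inner: "inner_nest_cond B" and outer: "outer_nest_cond B" using B nests_iff by auto
  have sub: "channel_of B \<subseteq> {v \<in> Inn. black v}" unfolding channel_of_def by blast
  have "even (card {u \<in> channel_of B. adj D \<alpha> vert v u})" if v: "v \<in> Inn" for v
  proof (cases "black v")
    case True
    then have no_adj: "{u \<in> channel_of B. adj D \<alpha> vert v u} = {}"
      using sub black_alpha unfolding adj_def by fastforce
    show ?thesis unfolding no_adj by simp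
  next
    case False
    have "vert (\<alpha> d) \<in> channel_of B \<longleftrightarrow> {d, \<alpha> d} \<in> coboundary B" if d: "d \<in> D" "vert d = v" for d
    proof -
      have ad: "\<alpha> d \<in> D" and bl: "black (vert (\<alpha> d))" using alpha_in_D d black_alpha False by auto
      have "{d, \<alpha> d} \<in> coboundary B \<longleftrightarrow> separates B (\<alpha> d)"
        using separates_iff_coboundary[OF d(1)] separates_alpha by simp
      moreover have "\<not> separates B (\<alpha> d)" "vert (\<alpha> d) \<notin> channel_of B" if "vert (\<alpha> d) \<in> Ext"
      proof -
        have "face (\<alpha> d) \<noteq> out" "face (\<sigma> (\<alpha> d)) \<noteq> out"
          using faces_at_Inn_ne_out[OF d(1)] d(2) v face_sigma by simp_all
        then show "\<not> separates B (\<alpha> d)" using outer that bl ad unfolding outer_nest_cond_def by blast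
        show "vert (\<alpha> d) \<notin> channel_of B" using that sub Inn_iff by blast
      qed
      moreover have "vert (\<alpha> d) \<in> Inn" if "vert (\<alpha> d) \<notin> Ext" using that ad Inn_iff by blast
      ultimately show ?thesis using channel_of_iff[OF inner _ bl ad refl] by blast
    qed
    then have "{d \<in> D. vert d = v \<and> vert (\<alpha> d) \<in> channel_of B}
        = {d \<in> D. vert d = v \<and> {d, \<alpha> d} \<in> coboundary B}" by blast
    moreover have "even (card {d \<in> D. vert d = v \<and> {d, \<alpha> d} \<in> coboundary B})"
      using odd_vertices_coboundary unfolding odd_vertices_def by blast
    ultimately show ?thesis using card_adjacent_in by simp
  qed
  then show ?thesis using sub unfolding inner_black_channels_def by blast
qed

lemma separates_complement:
  assumes "d \<in> D" "face d \<noteq> out" "face (\<sigma> d) \<noteq> out"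
  shows "separates (inner_faces - B) d \<longleftrightarrow> separates B d"
  using assms face_in_Faces sigma_in_D unfolding separates_def by blast

lemma complement_nest:
  assumes B: "B \<in> nests"
  shows "inner_faces - B \<in> nests" and "channel_of (inner_faces - B) = channel_of B"
proof -
  have inner: "inner_nest_cond B" and outer: "outer_nest_cond B" using B nests_iff by auto
  have at_Inn: "separates (inner_faces - B) d \<longleftrightarrow> separates B d" if "d \<in> D" "vert d \<in> Inn" for d
    using separates_complement faces_at_Inn_ne_out[OF that] face_sigma that(1) by simp
  have "inner_nest_cond (inner_faces - B)"
    unfolding inner_nest_cond_def
  proof (intro ballI impI)
    fix b d e assume b: "b \<in> Inn" "black b" and de: "d \<in> D" "e \<in> D" "vert d = b \<and> vert e = b"
    then have "separates B d = separates B e" using inner unfolding inner_nest_cond_def by blast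
    then show "separates (inner_faces - B) d = separates (inner_faces - B) e"
      using at_Inn[of d] at_Inn[of e] b de by (metis (full_types))
  qed
  moreover have "outer_nest_cond (inner_faces - B)"
    using outer separates_complement unfolding outer_nest_cond_def by simp
  ultimately show "inner_faces - B \<in> nests" using nests_iff by blast
  show "channel_of (inner_faces - B) = channel_of B"
    unfolding channel_of_def using at_Inn by blast
qed

definition star :: "'v set \<Rightarrow> 'd set set" where
  "star C = {{d, \<alpha> d} | d. d \<in> D \<and> vert d \<in> C}"

lemma star_subset: "star C \<subseteq> edges"
  unfolding star_def edges_def by blast

lemma edge_in_star_iff: "d \<in> D \<Longrightarrow> {d, \<alpha> d} \<in> star C \<longleftrightarrow> vert d \<in> C \<or> vert (\<alpha> d) \<in> C"
proof
  assume "{d, \<alpha> d} \<in> star C"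
  then obtain x where "x \<in> D" "vert x \<in> C" "{x, \<alpha> x} = {d, \<alpha> d}" unfolding star_def by blast
  then show "vert d \<in> C \<or> vert (\<alpha> d) \<in> C" unfolding edge_eq_iff by auto
next
  assume "d \<in> D" "vert d \<in> C \<or> vert (\<alpha> d) \<in> C"
  moreover have "{\<alpha> d, \<alpha> (\<alpha> d)} = {d, \<alpha> d}" by (simp add: edge_alpha)
  ultimately show "{d, \<alpha> d} \<in> star C" unfolding star_def using alpha_in_D by blast
qed

text \<open>Inside, the star of a channel has even degree: at a vertex of the channel by the
  semi-Eulerian condition, at a white vertex by the channel condition.\<close>

lemma odd_vertices_star:
  assumes C: "C \<in> channels"
  shows "odd_vertices (star C) \<subseteq> Ext"
proof (rule subsetI, rule ccontr)
  fix v assume odd: "v \<in> odd_vertices (star C)" and "v \<notin> Ext"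
  then have v: "v \<in> Inn" using odd_vertices_subset Inn_iff by blast
  have C_sub: "C \<subseteq> {v \<in> Inn. black v}" using C unfolding inner_black_channels_def by blast
  let ?S = "{d \<in> D. vert d = v \<and> {d, \<alpha> d} \<in> star C}"
  have white: "vert (\<alpha> d) \<notin> C" if "d \<in> D" "black (vert d)" for d
    using black_alpha[OF that(1)] that(2) C_sub by auto
  consider "v \<in> C" | "v \<notin> C" "black v" | "\<not> black v" by blast
  then have "even (card ?S)"
  proof cases
    case 1
    then have "?S = {d \<in> D. vert d = v}" using edge_in_star_iff by auto
    then show ?thesis using even_deg_Inn[OF v] C_sub 1 unfolding deg_def by auto
  next
    case 2
    then have empty: "?S = {}" using edge_in_star_iff white by auto
    show ?thesis unfolding empty by simp
  next
    case 3
    then have "?S = {d \<in> D. vert d = v \<and> vert (\<alpha> d) \<in> C}"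
      using edge_in_star_iff C_sub by auto
    then show ?thesis using C v card_adjacent_in unfolding inner_black_channels_def by simp
  qed
  then show False using odd unfolding odd_vertices_def by simp
qed

lemma nest_of_channel:
  assumes C: "C \<in> channels"
  shows "\<exists>B \<in> nests. channel_of B = C"
proof -
  have C_sub: "C \<subseteq> {v \<in> Inn. black v}" using C unfolding inner_black_channels_def by blast
  obtain B where B: "B \<subseteq> inner_faces"
    and cob: "\<And>d. d \<in> D \<Longrightarrow> face d \<noteq> out \<Longrightarrow> face (\<alpha> d) \<noteq> out \<Longrightarrow>
                 {d, \<alpha> d} \<in> coboundary B \<longleftrightarrow> {d, \<alpha> d} \<in> star C"
    using inner_coboundary_exists[OF star_subset odd_vertices_star[OF C]] by blast
  have sep: "separates B d \<longleftrightarrow> vert d \<in> C \<or> vert (\<alpha> d) \<in> C"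
    if "d \<in> D" "face d \<noteq> out" "face (\<sigma> d) \<noteq> out" for d
    using that cob separates_iff_coboundary edge_in_star_iff face_sigma by simp
  have white: "vert (\<alpha> d) \<notin> C" if "d \<in> D" "black (vert d)" for d
    using black_alpha[OF that(1)] that(2) C_sub by auto
  have at_Inn: "separates B d \<longleftrightarrow> vert d \<in> C" if "d \<in> D" "vert d \<in> Inn" "black (vert d)" for d
    using sep[OF that(1)] faces_at_Inn_ne_out[OF that(1,2)] face_sigma white[OF that(1,3)] by simp
  have "inner_nest_cond B"
    unfolding inner_nest_cond_def
  proof (intro ballI impI)
    fix b d e assume "b \<in> Inn" "black b" "d \<in> D" "e \<in> D" "vert d = b \<and> vert e = b"
    then show "separates B d = separates B e" using at_Inn by (metis (full_types))
  qed
  moreover have "outer_nest_cond B"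
    unfolding outer_nest_cond_def using sep white C_sub Inn_iff by blast
  ultimately have "B \<in> nests" using B nests_iff by blast
  moreover have "channel_of B = C"
  proof (intro set_eqI iffI)
    fix b assume "b \<in> channel_of B"
    then obtain d where "d \<in> D" "vert d = b" "b \<in> Inn" "black b" "separates B d"
      unfolding channel_of_def by blast
    then show "b \<in> C" using at_Inn by blast
  next
    fix b assume b: "b \<in> C"
    then have "b \<in> Inn" "black b" using C_sub by auto
    moreover obtain d where "d \<in> D" "vert d = b" using \<open>b \<in> Inn\<close> unfolding internal_def by blast
    ultimately show "b \<in> channel_of B" using at_Inn b unfolding channel_of_def by blast
  qed
  ultimately show ?thesis by blast
qed

lemma separates_eq_at_black:
  assumes B1: "B1 \<in> nests" and B2: "B2 \<in> nests" and same: "channel_of B1 = channel_of B2"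
    and d: "d \<in> D" "black (vert d)" "face d \<noteq> out" "face (\<alpha> d) \<noteq> out"
  shows "separates B1 d = separates B2 d"
proof (cases "vert d \<in> Ext")
  case True
  then have "\<not> separates B d" if "B \<in> nests" for B
    using that d face_sigma unfolding nests_iff outer_nest_cond_def by auto
  then show ?thesis using B1 B2 by blast
next
  case False
  then have "vert d \<in> Inn" using Inn_iff d(1) by blast
  then show ?thesis
    using channel_of_iff[OF _ _ d(2,1) refl] B1 B2 same unfolding nests_iff by blast
qed

lemma coboundary_sym_diff_nests:
  assumes B1: "B1 \<in> nests" and B2: "B2 \<in> nests" and same: "channel_of B1 = channel_of B2"
  shows "coboundary (sym_diff B1 B2) \<subseteq> outer_edges"
proof
  fix e assume e: "e \<in> coboundary (sym_diff B1 B2)"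
  then obtain d where d: "d \<in> D" "e = {d, \<alpha> d}" using coboundary_subset by (blast elim: edgesE)
  show "e \<in> outer_edges"
  proof (rule ccontr)
    assume "e \<notin> outer_edges"
    then have faces: "face d \<noteq> out" "face (\<alpha> d) \<noteq> out"
      using d edge_in_outer_edges_iff alpha_in_D unfolding outer_dart_def by auto
    have "separates B1 d = separates B2 d"
    proof (cases "black (vert d)")
      case True
      show ?thesis using separates_eq_at_black[OF B1 B2 same d(1) True faces] .
    next
      case False
      then have "separates B1 (\<alpha> d) = separates B2 (\<alpha> d)"
        using separates_eq_at_black[OF B1 B2 same alpha_in_D[OF d(1)]] black_alpha[OF d(1)] faces
        by simp
      then show ?thesis using separates_alpha by simp
    qed
    then show False
      using e d coboundary_sym_diff separates_iff_coboundary[OF d(1)] by blast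
  qed
qed

lemma nests_same_channel:
  assumes B1: "B1 \<in> nests" and B2: "B2 \<in> nests" and same: "channel_of B1 = channel_of B2"
  shows "B2 = B1 \<or> B2 = inner_faces - B1"
proof -
  have sub: "B1 \<subseteq> inner_faces" "B2 \<subseteq> inner_faces" using B1 B2 nests_iff by auto
  then have "sym_diff B1 B2 \<subseteq> inner_faces" by blast
  then have "sym_diff B1 B2 = {} \<or> sym_diff B1 B2 = inner_faces"
    using coboundary_sym_diff_nests[OF assms] by (rule coboundary_subset_outer_edges)
  then show ?thesis using sub by blast
qed

lemma inner_faces_nonempty: "inner_faces \<noteq> {}"
proof -
  let ?d = first_outer_dart
  have "face (\<alpha> ?d) \<in> Faces" "face (\<alpha> ?d) \<noteq> out"
    using outer_dart_first_outer_dart outer_dart_alpha alpha_in_D face_in_Faces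
    unfolding outer_dart_def by auto
  then show ?thesis by blast
qed

lemma card_nests_with_channel:
  assumes "C \<in> channels"
  shows "card {B \<in> nests. channel_of B = C} = 2"
proof -
  obtain B where B: "B \<in> nests" "channel_of B = C" using nest_of_channel[OF assms] by blast
  have "{B' \<in> nests. channel_of B' = C} = {B, inner_faces - B}"
    using B nests_same_channel[OF B(1)] complement_nest[OF B(1)] by auto
  moreover have "B \<noteq> inner_faces - B" using inner_faces_nonempty B nests_iff by blast
  ultimately show ?thesis by simp
qed

lemma card_nests: "card nests = 2 * card channels"
proof -
  have "finite channels"
    by (rule finite_subset[of _ "Pow (vert ` D)"])
      (use finite_darts in \<open>auto simp: inner_black_channels_def internal_def\<close>)
  moreover have "finite nests"
    by (rule finite_subset[of _ "Pow Faces"]) (use finite_Faces nests_iff in auto)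
  moreover have partition: "nests = (\<Union>C\<in>channels. {B \<in> nests. channel_of B = C})"
    using channel_of_nest by blast
  ultimately have "card nests = (\<Sum>C\<in>channels. card {B \<in> nests. channel_of B = C})"
    by (subst partition, intro card_UN_disjoint) auto
  also have "\<dots> = (\<Sum>C\<in>channels. 2)" using card_nests_with_channel by simp
  finally show ?thesis by simp
qed

end

theorem theorem4p5:
  fixes D :: "'d set" and \<alpha> \<sigma> :: "'d \<Rightarrow> 'd" and vert :: "'d \<Rightarrow> 'v"
    and black :: "'v \<Rightarrow> bool" and out :: "'d set"
  assumes "plane_graph D \<alpha> \<sigma> vert out"
    and "proper_coloring D \<alpha> vert black"
    and "inner_semi_eulerian D \<alpha> \<sigma> vert black out"
    and "outer_is_cycle D \<alpha> \<sigma> vert out"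
  shows "card (billiard_nests D \<alpha> \<sigma> vert black out)
           = 2 * card (inner_black_channels D \<alpha> \<sigma> vert black out)"
proof -
  obtain n c where "3 \<le> n" "bij_betw c {..<n} (external D \<alpha> \<sigma> vert out)"
    "\<forall>u\<in>external D \<alpha> \<sigma> vert out. \<forall>v\<in>external D \<alpha> \<sigma> vert out. adj D \<alpha> vert u v \<longleftrightarrow>
       (\<exists>i<n. (u = c i \<and> v = c (Suc i mod n)) \<or> (v = c i \<and> u = c (Suc i mod n)))"
    using assms(4) unfolding outer_is_cycle_def by blast
  then interpret billiard_map D \<alpha> \<sigma> vert out n c black
    using assms by unfold_locales
  show ?thesis by (rule card_nests)
qed

end
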